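(* Let $G=(X,b,m,c)$ be a weighted graph with $c=0$ and let $p\in(1,\infty)$. The following are equivalent: (i) $G$ is $p$-parabolic; (ii) every non-negative $p$-superharmonic function on $X$ is constant; (iii) every $p$-superharmonic function on $X$ belonging to $D^p$ is constant; (iv) every $p$-superharmonic function on $X$ belonging to $D_0^p$ is constant; (v) every bounded $p$-superharmonic function on $X$ is constant; (vi) every $p$-superharmonic function on $X$ which is bounded from below is constant; (vii) there exists a non-zero $p$-harmonic function in $D_0^p$.
   Context: Weighted graph $G=(X,b,m,c)$: $X$ countably infinite; $b$ symmetric, nonnegative, zero on the diagonal, $\sum_yb(x,y)<\infty$; $m>0$; $c\ge0$; $x\sim y$ iff $b(x,y)>0$; $X$ connected. $\mathcal{E}_p(f)=\frac12\sum_{x,y}b(x,y)|f(x)-f(y)|^p+\sum_xc(x)|f(x)|^p$, $D^p=\{f:\mathcal{E}_p(f)<\infty\}$, $\|f\|_{o,p}=(\mathcal{E}_p(f)+|f(o)|^p)^{1/p}$ for a fixed $o\in X$, $D_0^p$ the closure of finitely supported functions in $(D^p,\|\cdot\|_{o,p})$. $G$ is $p$-parabolic if $\inf\{\mathcal{E}_p(\varphi):\varphi\text{ finitely supported},\varphi\ge1\text{ on }K\}=0$ for all finite $K$. $a^{\langle p-1\rangle}=|a|^{p-2}a$; $F^p(X)=\{f:\sum_yb(x,y)|f(x)-f(y)|^{p-1}<\infty\ \forall x\}$; $\Delta_pf(x)=\frac1{m(x)}\sum_yb(x,y)(f(x)-f(y))^{\langle p-1\rangle}$. $f$ is $p$-superharmonic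 (resp. $p$-harmonic) on $X$ if $f\in F^p(X)$ and $\Delta_pf\ge0$ (resp. $=0$) on $X$. *)

theory Defs
  imports "HOL-Analysis.Analysis"
begin

definition weighted_graph :: "('a \<Rightarrow> 'a \<Rightarrow> real) \<Rightarrow> ('a \<Rightarrow> real) \<Rightarrow> ('a \<Rightarrow> real) \<Rightarrow> bool" where
  "weighted_graph b m c \<longleftrightarrow>
     countable (UNIV :: 'a set) \<and> infinite (UNIV :: 'a set) \<and>
     (\<forall>x y. b x y = b y x) \<and> (\<forall>x y. 0 \<le> b x y) \<and> (\<forall>x. b x x = 0) \<and>
     (\<forall>x. (\<lambda>y. b x y) summable_on UNIV) \<and>
     (\<forall>x. 0 < m x) \<and> (\<forall>x. 0 \<le> c x) \<and>
     (\<forall>x y. (x, y) \<in> {(u, v). 0 < b u v}\<^sup>*)"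

definition in_Dp :: "real \<Rightarrow> ('a \<Rightarrow> 'a \<Rightarrow> real) \<Rightarrow> ('a \<Rightarrow> real) \<Rightarrow> ('a \<Rightarrow> real) \<Rightarrow> bool" where
  "in_Dp p b c f \<longleftrightarrow>
     (\<lambda>(x, y). b x y * \<bar>f x - f y\<bar> powr p) summable_on UNIV \<and>
     (\<lambda>x. c x * \<bar>f x\<bar> powr p) summable_on UNIV"

text \<open>The p-energy (meaningful for f in D^p).\<close>
definition energy :: "real \<Rightarrow> ('a \<Rightarrow> 'a \<Rightarrow> real) \<Rightarrow> ('a \<Rightarrow> real) \<Rightarrow> ('a \<Rightarrow> real) \<Rightarrow> real" where
  "energy p b c f =
     (1/2) * infsum (\<lambda>(x, y). b x y * \<bar>f x - f y\<bar> powr p) UNIV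
     + infsum (\<lambda>x. c x * \<bar>f x\<bar> powr p) UNIV"

definition norm_op :: "real \<Rightarrow> ('a \<Rightarrow> 'a \<Rightarrow> real) \<Rightarrow> ('a \<Rightarrow> real) \<Rightarrow> 'a \<Rightarrow> ('a \<Rightarrow> real) \<Rightarrow> real" where
  "norm_op p b c x0 f = (energy p b c f + \<bar>f x0\<bar> powr p) powr (1 / p)"

definition fin_supp :: "('a \<Rightarrow> real) \<Rightarrow> bool" where
  "fin_supp f \<longleftrightarrow> finite {x. f x \<noteq> 0}"

text \<open>D_0^p: closure of finitely supported functions in (D^p, norm_op).\<close>
definition in_D0p :: "real \<Rightarrow> ('a \<Rightarrow> 'a \<Rightarrow> real) \<Rightarrow> ('a \<Rightarrow> real) \<Rightarrow> 'a \<Rightarrow> ('a \<Rightarrow> real) \<Rightarrow> bool" where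
  "in_D0p p b c x0 f \<longleftrightarrow> in_Dp p b c f \<and>
     (\<forall>\<epsilon>>0. \<exists>\<phi>. fin_supp \<phi> \<and> norm_op p b c x0 (\<lambda>x. f x - \<phi> x) < \<epsilon>)"

definition p_parabolic :: "real \<Rightarrow> ('a \<Rightarrow> 'a \<Rightarrow> real) \<Rightarrow> ('a \<Rightarrow> real) \<Rightarrow> bool" where
  "p_parabolic p b c \<longleftrightarrow>
     (\<forall>K. finite K \<longrightarrow>
        (INF \<phi> \<in> {\<phi>. fin_supp \<phi> \<and> (\<forall>x\<in>K. 1 \<le> \<phi> x)}. energy p b c \<phi>) = 0)"

definition signed_pow :: "real \<Rightarrow> real \<Rightarrow> real" where
  "signed_pow a q = \<bar>a\<bar> powr (q - 1) * a"

definition in_Fp :: "real \<Rightarrow> ('a \<Rightarrow> 'a \<Rightarrow> real) \<Rightarrow> ('a \<Rightarrow> real) \<Rightarrow> bool" where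
  "in_Fp p b f \<longleftrightarrow> (\<forall>x. (\<lambda>y. b x y * \<bar>f x - f y\<bar> powr (p - 1)) summable_on UNIV)"

definition p_laplacian :: "real \<Rightarrow> ('a \<Rightarrow> 'a \<Rightarrow> real) \<Rightarrow> ('a \<Rightarrow> real) \<Rightarrow> ('a \<Rightarrow> real) \<Rightarrow> 'a \<Rightarrow> real" where
  "p_laplacian p b m f x = (1 / m x) * infsum (\<lambda>y. b x y * signed_pow (f x - f y) (p - 1)) UNIV"

definition p_superharmonic :: "real \<Rightarrow> ('a \<Rightarrow> 'a \<Rightarrow> real) \<Rightarrow> ('a \<Rightarrow> real) \<Rightarrow> ('a \<Rightarrow> real) \<Rightarrow> bool" where
  "p_superharmonic p b m f \<longleftrightarrow> in_Fp p b f \<and> (\<forall>x. 0 \<le> p_laplacian p b m f x)"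

definition p_harmonic :: "real \<Rightarrow> ('a \<Rightarrow> 'a \<Rightarrow> real) \<Rightarrow> ('a \<Rightarrow> real) \<Rightarrow> ('a \<Rightarrow> real) \<Rightarrow> bool" where
  "p_harmonic p b m f \<longleftrightarrow> in_Fp p b f \<and> (\<forall>x. p_laplacian p b m f x = 0)"

definition is_constant :: "('a \<Rightarrow> real) \<Rightarrow> bool" where
  "is_constant f \<longleftrightarrow> (\<exists>k. \<forall>x. f x = k)"

end

theory Submission
  imports Defs
begin

text \<open>If the graph is parabolic, there are finitely supported cutoffs \<open>\<phi>\<close> that equal \<open>1\<close> on a given
  finite set and have arbitrarily small energy. Testing the superharmonicity of \<open>u\<close> against
  \<open>\<phi>\<^sup>p / u\<^sup>p\<^sup>-\<^sup>1\<close> (Picone's inequality, for \<open>u\<close> bounded below) or against \<open>\<phi> \<cdot> T(u)\<close> for a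
  truncation \<open>T\<close> (for \<open>u\<close> of finite energy) shows that no edge carries energy, so \<open>u\<close> is
  constant; and the cutoffs show that \<open>1 \<in> D\<^sub>0\<^sup>p\<close>, a nonzero harmonic function.

  If the graph is not parabolic, some finite set \<open>K\<close> has positive capacity. Minimising the energy
  among functions with values in \<open>[0, 1]\<close> that equal \<open>1\<close> on \<open>K\<close> and are supported in the sets of an
  exhaustion, and passing to a pointwise limit, gives the equilibrium potential of \<open>K\<close>: it is
  superharmonic, lies in \<open>D\<^sub>0\<^sup>p\<close> because the energies converge, and is not constant because its
  energy is at least the capacity. Finally, by Green's formula and Young's inequality a harmonic
  function in \<open>D\<^sub>0\<^sup>p\<close> has zero energy and hence is constant, and a nonzero constant in \<open>D\<^sub>0\<^sup>p\<close>
  forces parabolicity by continuity of point evaluations.\<close>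

section \<open>Elementary real inequalities\<close>

lemma signed_pow_zero [simp]: "signed_pow 0 q = 0"
  by (simp add: signed_pow_def)

lemma signed_pow_minus: "signed_pow (- a) q = - signed_pow a q"
  by (simp add: signed_pow_def)

lemma signed_pow_eq_sgn: "signed_pow a q = sgn a * \<bar>a\<bar> powr q"
proof (cases "a = 0")
  case False
  then have "\<bar>a\<bar> powr q = \<bar>a\<bar> powr (q - 1) * \<bar>a\<bar>"
    using powr_add[of "\<bar>a\<bar>" "q - 1" 1] by simp
  then show ?thesis
    using False by (auto simp: signed_pow_def sgn_if)
qed simp

lemma abs_signed_pow: "\<bar>signed_pow a q\<bar> = \<bar>a\<bar> powr q"
  by (simp add: signed_pow_eq_sgn abs_mult abs_sgn_eq)

lemma signed_pow_mult_self: "signed_pow a q * a = \<bar>a\<bar> powr (q + 1)"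
proof -
  have "sgn a * \<bar>a\<bar> powr q * a = \<bar>a\<bar> powr q * \<bar>a\<bar>"
    by (simp add: sgn_if)
  then show ?thesis
    by (cases "a = 0") (simp_all add: signed_pow_eq_sgn powr_add)
qed

lemma signed_pow_nonneg_iff: "0 \<le> signed_pow a q \<longleftrightarrow> 0 \<le> a"
  by (auto simp: signed_pow_eq_sgn sgn_if)

lemma signed_pow_pos_iff: "0 < signed_pow a q \<longleftrightarrow> 0 < a"
  by (auto simp: signed_pow_eq_sgn sgn_if)

lemma tendsto_signed_pow:
  assumes "0 < q" and "(f \<longlongrightarrow> a) F"
  shows "((\<lambda>x. signed_pow (f x) q) \<longlongrightarrow> signed_pow a q) F"
proof (cases "a = 0")
  case False
  then show ?thesis
    unfolding signed_pow_def using assms(2) by (intro tendsto_intros) auto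
next
  case True
  have "((\<lambda>x. \<bar>f x\<bar> powr q) \<longlongrightarrow> \<bar>a\<bar> powr q) F"
    using assms by (intro tendsto_intros) auto
  then have "((\<lambda>x. \<bar>signed_pow (f x) q\<bar>) \<longlongrightarrow> 0) F"
    using True assms(1) by (simp add: abs_signed_pow)
  then show ?thesis
    using True by (simp add: tendsto_rabs_zero_cancel)
qed

lemma signed_pow_mult_antimono_nonneg:
  assumes "\<And>s t. s \<le> t \<Longrightarrow> T t \<le> T s"
  shows "0 \<le> signed_pow (a - c) q * (T c - T a)"
proof (cases "c \<le> a")
  case True
  then show ?thesis
    using assms[OF True] signed_pow_nonneg_iff[of "a - c" q] by simp
next
  case False
  then have "signed_pow (a - c) q \<le> 0" "T c - T a \<le> 0"
    using assms[of a c] signed_pow_nonneg_iff[of "a - c" q] by auto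
  then show ?thesis
    by (rule mult_nonpos_nonpos)
qed

lemma exists_pos_mult_less:
  fixes a e :: real
  assumes "0 \<le> a" "0 < e"
  obtains \<delta> where "0 < \<delta>" "\<delta> * a < e"
proof -
  have "e / (a + 1) * a < e"
    using assms by (simp add: field_simps)
  then show ?thesis
    using that[of "e / (a + 1)"] assms by simp
qed

lemma powr_less_powr_iff:
  fixes x y r :: real
  assumes "0 < r" "0 \<le> x" "0 \<le> y"
  shows "x powr r < y powr r \<longleftrightarrow> x < y"
  using assms powr_less_mono2[of r x y] powr_mono2[of r y x] by linarith

lemma powr_inverse_less_iff:
  fixes a e r :: real
  assumes "0 < r" "0 \<le> a" "0 \<le> e"
  shows "a powr (1 / r) < e \<longleftrightarrow> a < e powr r"
proof -
  have "a powr (1 / r) < e \<longleftrightarrow> (a powr (1 / r)) powr r < e powr r"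
    using assms by (simp add: powr_less_powr_iff)
  also have "(a powr (1 / r)) powr r = a"
    using assms by (simp add: powr_powr)
  finally show ?thesis .
qed

lemma exists_radius_powr_le:
  fixes a p :: real
  assumes "0 < a" "0 < p"
  obtains \<rho> where "0 < \<rho>" "\<rho> \<le> a" "\<rho> powr p \<le> a"
proof
  show "0 < min a (a powr (1 / p))" "min a (a powr (1 / p)) \<le> a"
    using assms by simp_all
  have "min a (a powr (1 / p)) powr p \<le> (a powr (1 / p)) powr p"
    using assms by (intro powr_mono2) auto
  then show "min a (a powr (1 / p)) powr p \<le> a"
    using assms by (simp add: powr_powr)
qed

lemma powr_convex_ineq:
  fixes x y t p :: real
  assumes "1 \<le> p" "0 \<le> x" "0 \<le> y" "0 \<le> t" "t \<le> 1"
  shows "(t * x + (1 - t) * y) powr p \<le> t * x powr p + (1 - t) * y powr p"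
proof -
  have scale: "(s * z) powr p \<le> s * z powr p" if "0 \<le> s" "s \<le> 1" "0 \<le> z" for s z
  proof -
    have "s powr p \<le> s powr 1"
      using that assms(1) powr_mono'[of 1 p s] by (cases "s = 0") auto
    then show ?thesis
      using that by (simp add: powr_mult mult_right_mono)
  qed
  consider "x = 0" | "y = 0" | "0 < x" "0 < y"
    using assms by linarith
  then show ?thesis
  proof cases
    case 1
    then show ?thesis using scale[of "1 - t" y] assms by simp
  next
    case 2
    then show ?thesis using scale[of t x] assms by simp
  next
    case 3
    then show ?thesis
      using convex_onD[OF powr_convex[OF assms(1)], of t y x] assms by (simp add: add.commute)
  qed
qed

lemma abs_diff_powr_le:
  fixes a c p :: real
  assumes "0 \<le> p"
  shows "\<bar>a - c\<bar> powr p \<le> 2 powr p * (\<bar>a\<bar> powr p + \<bar>c\<bar> powr p)"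
proof -
  have "\<bar>a - c\<bar> powr p \<le> (2 * max \<bar>a\<bar> \<bar>c\<bar>) powr p"
    using assms by (intro powr_mono2) auto
  also have "\<dots> = 2 powr p * max \<bar>a\<bar> \<bar>c\<bar> powr p"
    by (simp add: powr_mult)
  also have "\<dots> \<le> 2 powr p * (\<bar>a\<bar> powr p + \<bar>c\<bar> powr p)"
    by (intro mult_left_mono) (auto simp: max_def)
  finally show ?thesis .
qed

lemma abs_powr_above_tangent:
  fixes a c p :: real
  assumes "1 < p"
  shows "\<bar>c\<bar> powr p + p * signed_pow c (p - 1) * (a - c) \<le> \<bar>a\<bar> powr p"
proof -
  have pos: "c powr p + p * c powr (p - 1) * (a - c) \<le> \<bar>a\<bar> powr p" if "0 < c" for a c :: real
  proof (cases "0 < a")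
    case True
    have "((\<lambda>x. x powr p) has_field_derivative p * c powr (p - 1)) (at c within {0<..})"
      using has_real_derivative_powr[OF \<open>0 < c\<close>] has_field_derivative_at_within by blast
    from convex_on_imp_above_tangent[OF powr_convex[of p] _ _ _ this, of a]
    show ?thesis
      using assms that True by (simp add: interior_open)
  next
    case False
    have "c powr p = c powr (p - 1) * c"
      using powr_add[of c "p - 1" 1] that by simp
    then have "c powr p + p * c powr (p - 1) * (a - c) = c powr (p - 1) * ((1 - p) * c + p * a)"
      by (simp add: algebra_simps)
    also have "\<dots> \<le> 0"
    proof -
      have "(1 - p) * c \<le> 0" "p * a \<le> 0"
        using assms that False by (auto intro: mult_nonpos_nonneg mult_nonneg_nonpos)
      then show ?thesis
        by (intro mult_nonneg_nonpos) auto
    qed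
    finally show ?thesis
      by (meson order.trans powr_ge_zero)
  qed
  consider "c = 0" | "0 < c" | "c < 0"
    by linarith
  then show ?thesis
  proof cases
    case 2
    then show ?thesis using pos[of c a] by (simp add: signed_pow_eq_sgn)
  next
    case 3
    then show ?thesis using pos[of "- c" "- a"] by (simp add: signed_pow_eq_sgn algebra_simps)
  qed simp
qed

lemma young_powr:
  fixes a c p :: real
  assumes "1 < p" "0 \<le> a" "0 \<le> c"
  shows "a powr (p - 1) * c \<le> (p - 1) / p * a powr p + 1 / p * c powr p"
proof -
  have "a powr (p - 1) * c \<le> (a powr (p - 1)) powr (p / (p - 1)) / (p / (p - 1)) + c powr p / p"
    using assms by (intro Youngs_inequality) (auto simp: field_simps)
  also have "(a powr (p - 1)) powr (p / (p - 1)) = a powr p"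
    using assms by (simp add: powr_powr)
  finally show ?thesis
    using assms by (simp add: field_simps)
qed

lemma young_powr_eps:
  fixes a c p \<delta> :: real
  assumes "1 < p" "0 < \<delta>" "0 \<le> a" "0 \<le> c"
  shows "a powr (p - 1) * c \<le> \<delta> * a powr p + 1 / \<delta> powr (p - 1) * c powr p"
proof (cases "c \<le> \<delta> * a")
  case True
  have "a powr (p - 1) * c \<le> a powr (p - 1) * (\<delta> * a)"
    using True assms by (intro mult_left_mono) auto
  also have "\<dots> = \<delta> * a powr p"
    using powr_add[of a "p - 1" 1] assms by (cases "a = 0") (auto simp: algebra_simps)
  finally show ?thesis
    using assms by (intro add_increasing2) auto
next
  case False
  then have "a \<le> c / \<delta>"
    using assms by (simp add: field_simps)
  then have "a powr (p - 1) * c \<le> (c / \<delta>) powr (p - 1) * c"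
    using assms by (intro mult_right_mono powr_mono2) auto
  also have "\<dots> = 1 / \<delta> powr (p - 1) * c powr p"
    using powr_add[of c "p - 1" 1] assms by (cases "c = 0") (auto simp: powr_divide algebra_simps)
  finally show ?thesis
    using assms by (intro add_increasing) auto
qed

text \<open>Picone's inequality, first for \<open>t < s\<close>: writing \<open>\<theta> = (s - t) / s\<close>, the point \<open>\<alpha>\<close> is the convex
  combination \<open>\<theta> X + (1 - \<theta>) Y\<close> of \<open>X = (\<alpha> - \<beta>) / \<theta>\<close> and \<open>Y = \<beta> / (1 - \<theta>)\<close>, and convexity of
  \<open>x\<^sup>p\<close> gives the claim.\<close>

lemma picone_less:
  fixes s t \<alpha> \<beta> p :: real
  assumes "1 < p" "0 < t" "t < s" "0 \<le> \<alpha>" "0 \<le> \<beta>"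
  shows "(s - t) powr (p - 1) * (\<alpha> powr p / s powr (p - 1) - \<beta> powr p / t powr (p - 1))
           \<le> \<bar>\<alpha> - \<beta>\<bar> powr p"
proof (cases "\<alpha> \<le> \<beta>")
  case True
  have "\<alpha> powr p / s powr (p - 1) \<le> \<beta> powr p / t powr (p - 1)"
    using assms True by (intro frac_le powr_mono2) auto
  then have "(s - t) powr (p - 1) * (\<alpha> powr p / s powr (p - 1) - \<beta> powr p / t powr (p - 1)) \<le> 0"
    by (intro mult_nonneg_nonpos) auto
  then show ?thesis
    by (meson order.trans powr_ge_zero)
next
  case False
  define q where "q = p - 1"
  have p_eq: "p = q + 1" and "0 < q"
    using assms by (auto simp: q_def)
  define \<theta> where "\<theta> = (s - t) / s"
  have \<theta>: "0 < \<theta>" "0 < 1 - \<theta>" and one_minus_\<theta>: "1 - \<theta> = t / s"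
    using assms by (auto simp: \<theta>_def field_simps)
  define X where "X = (\<alpha> - \<beta>) / \<theta>"
  define Y where "Y = \<beta> / (1 - \<theta>)"
  have "\<alpha> = \<theta> * X + (1 - \<theta>) * Y"
    using \<theta> by (simp add: X_def Y_def)
  then have "\<alpha> powr p \<le> \<theta> * X powr p + (1 - \<theta>) * Y powr p"
    using powr_convex_ineq[of p X Y \<theta>] assms \<theta> False by (auto simp: X_def Y_def)
  also have "\<theta> * X powr p = (\<alpha> - \<beta>) powr p / \<theta> powr q"
    using \<theta> False by (simp add: X_def powr_divide p_eq powr_add)
  also have "(1 - \<theta>) * Y powr p = \<beta> powr p / (1 - \<theta>) powr q"
    using \<theta> assms by (simp add: Y_def powr_divide p_eq powr_add)
  finally have "\<theta> powr q * \<alpha> powr p \<le> (\<alpha> - \<beta>) powr p + \<theta> powr q * \<beta> powr p / (1 - \<theta>) powr q"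
    using \<theta> by (simp add: field_simps)
  moreover have "\<theta> powr q = (s - t) powr q / s powr q"
    using assms by (simp add: \<theta>_def powr_divide)
  moreover have "(1 - \<theta>) powr q = t powr q / s powr q"
    unfolding one_minus_\<theta> using assms by (simp add: powr_divide)
  ultimately have "(s - t) powr q * \<alpha> powr p / s powr q
      \<le> (\<alpha> - \<beta>) powr p + (s - t) powr q * \<beta> powr p / t powr q"
    using assms by (simp add: field_simps)
  then show ?thesis
    using False assms by (simp add: q_def[symmetric] field_simps)
qed

lemma picone:
  fixes s t \<alpha> \<beta> p :: real
  assumes "1 < p" "0 < s" "0 < t" "0 \<le> \<alpha>" "0 \<le> \<beta>"
  shows "signed_pow (s - t) (p - 1) * (\<alpha> powr p / s powr (p - 1) - \<beta> powr p / t powr (p - 1))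
           \<le> \<bar>\<alpha> - \<beta>\<bar> powr p"
proof -
  consider "s = t" | "t < s" | "s < t"
    by linarith
  then show ?thesis
  proof cases
    case 2
    then show ?thesis
      using picone_less[OF assms(1,3) 2 assms(4,5)] by (simp add: signed_pow_eq_sgn)
  next
    case 3
    then show ?thesis
      using picone_less[OF assms(1,2) 3 assms(5,4)]
      by (simp add: signed_pow_eq_sgn abs_minus_commute algebra_simps)
  qed simp
qed

lemma signed_pow_diff_mult_inverse_neg:
  fixes s t p :: real
  assumes "1 < p" "0 < s" "0 < t" "s \<noteq> t"
  shows "signed_pow (s - t) (p - 1) * (1 / s powr (p - 1) - 1 / t powr (p - 1)) < 0"
proof (cases "s < t")
  case True
  then have "1 / t powr (p - 1) < 1 / s powr (p - 1)"
    using assms by (intro divide_strict_left_mono powr_less_mono2) auto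
  moreover have "signed_pow (s - t) (p - 1) < 0"
    using True signed_pow_nonneg_iff[of "s - t" "p - 1"] by linarith
  ultimately show ?thesis
    by (simp add: mult_neg_pos)
next
  case False
  then have "1 / s powr (p - 1) < 1 / t powr (p - 1)"
    using assms by (intro divide_strict_left_mono powr_less_mono2) auto
  moreover have "0 < signed_pow (s - t) (p - 1)"
    using False assms(4) signed_pow_pos_iff[of "s - t" "p - 1"] by linarith
  ultimately show ?thesis
    by (simp add: mult_pos_neg)
qed

section \<open>Unordered sums\<close>

lemma summable_on_comparison_abs:
  fixes f g :: "'i \<Rightarrow> real"
  assumes "g summable_on A" "\<And>x. x \<in> A \<Longrightarrow> \<bar>f x\<bar> \<le> g x"
  shows "f summable_on A"
proof -
  have "(\<lambda>x. norm (f x)) summable_on A"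
    using summable_on_comparison_test[OF assms(1)] assms(2) by fastforce
  then show ?thesis
    using summable_on_iff_abs_summable_on_real by blast
qed

lemma has_sum_diff:
  fixes f g :: "'i \<Rightarrow> 'b::topological_ab_group_add"
  assumes "(f has_sum a) A" "(g has_sum c) A"
  shows "((\<lambda>x. f x - g x) has_sum (a - c)) A"
proof -
  have "((\<lambda>x. - g x) has_sum - c) A"
    using assms(2) by (simp add: has_sum_uminus)
  then show ?thesis
    using has_sum_add[OF assms(1)] by fastforce
qed

lemma has_sum_sum:
  fixes f :: "'s \<Rightarrow> 'i \<Rightarrow> 'b::topological_comm_monoid_add"
  assumes "finite S" "\<And>s. s \<in> S \<Longrightarrow> (f s has_sum a s) A"
  shows "((\<lambda>x. \<Sum>s\<in>S. f s x) has_sum (\<Sum>s\<in>S. a s)) A"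
  using assms by (induction S rule: finite_induct) (auto intro: has_sum_add)

lemma has_sum_row:
  fixes f :: "'b \<Rightarrow> 'c::topological_comm_monoid_add"
  assumes "(f has_sum a) UNIV"
  shows "((\<lambda>z. if fst z = s then f (snd z) else 0) has_sum a) UNIV"
proof -
  have "((\<lambda>z. if fst z = s then f (snd z) else 0) has_sum a) (range (Pair s))"
    using assms by (subst has_sum_reindex) (auto simp: inj_on_def o_def)
  then show ?thesis
    by (rule has_sum_cong_neutral[THEN iffD1, rotated -1]) auto
qed

lemma has_sum_col:
  fixes f :: "'b \<Rightarrow> 'c::topological_comm_monoid_add"
  assumes "(f has_sum a) UNIV"
  shows "((\<lambda>z. if snd z = s then f (fst z) else 0) has_sum a) UNIV"
proof -
  have "((\<lambda>z. if snd z = s then f (fst z) else 0) has_sum a) (range (\<lambda>x. (x, s)))"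
    using assms by (subst has_sum_reindex) (auto simp: inj_on_def o_def)
  then show ?thesis
    by (rule has_sum_cong_neutral[THEN iffD1, rotated -1]) auto
qed

lemma has_sum_ge_element:
  fixes f :: "'i \<Rightarrow> real"
  assumes "(f has_sum S) A" "\<And>x. x \<in> A \<Longrightarrow> 0 \<le> f x" "a \<in> A"
  shows "f a \<le> S"
  using finite_sum_le_has_sum[OF assms(1), of "{a}"] assms(2,3) by simp

lemma infsum_split_finite:
  fixes g :: "'i \<Rightarrow> real"
  assumes "g summable_on UNIV" "finite F"
  shows "g summable_on (- F)" "infsum g UNIV = sum g F + infsum g (- F)"
proof -
  show sF: "g summable_on (- F)"
    using summable_on_subset_banach[OF assms(1)] by auto
  have "infsum g UNIV = infsum g (F \<union> - F)"
    by simp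
  also have "\<dots> = sum g F + infsum g (- F)"
    using sF assms by (subst infsum_Un_disjoint) auto
  finally show "infsum g UNIV = sum g F + infsum g (- F)" .
qed

lemma INF_eq_0_iff:
  fixes f :: "'b \<Rightarrow> real"
  assumes "A \<noteq> {}" "\<And>x. x \<in> A \<Longrightarrow> 0 \<le> f x"
  shows "(INF x\<in>A. f x) = 0 \<longleftrightarrow> (\<forall>e>0. \<exists>x\<in>A. f x < e)"
proof -
  have bdd: "bdd_below (f ` A)"
    using assms(2) by (intro bdd_belowI[of _ 0]) auto
  have "0 \<le> (INF x\<in>A. f x)"
    using assms by (intro cINF_greatest) auto
  moreover have "(INF x\<in>A. f x) < e \<longleftrightarrow> (\<exists>x\<in>A. f x < e)" for e
    using cInf_less_iff[OF _ bdd, of e] assms(1) by simp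
  ultimately show ?thesis
    by (metis antisym field_le_epsilon add_0 less_imp_le)
qed

lemma abs_infsum_le:
  fixes k K :: "'i \<Rightarrow> real"
  assumes "K summable_on A" "\<And>x. x \<in> A \<Longrightarrow> \<bar>k x\<bar> \<le> K x"
  shows "\<bar>infsum k A\<bar> \<le> infsum K A"
proof -
  have k: "k summable_on A"
    using assms by (rule summable_on_comparison_abs)
  show ?thesis
    using norm_infsum_le[OF has_sum_infsum[OF k] has_sum_infsum[OF assms(1)]] assms(2) by simp
qed

lemma infsum_tail_small:
  fixes g :: "'i \<Rightarrow> real"
  assumes "g summable_on UNIV" "0 < e"
  obtains F where "finite F" "infsum g (- F) < e"
proof -
  obtain F where "finite F" and "dist (sum g F) (infsum g UNIV) \<le> e / 2"
    using infsum_finite_approximation[OF assms(1), of "e / 2"] assms(2) by auto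
  moreover note infsum_split_finite[OF assms(1) \<open>finite F\<close>]
  ultimately show ?thesis
    using that assms(2) by (simp add: dist_real_def)
qed

text \<open>Pratt's lemma; classical dominated convergence is the case of a constant dominating sequence.\<close>

lemma tendsto_infsum_dominated:
  fixes f G :: "nat \<Rightarrow> 'i \<Rightarrow> real"
  assumes G_summable: "\<And>n. G n summable_on UNIV" and g_summable: "g summable_on UNIV"
    and dominated: "\<And>n x. \<bar>f n x\<bar> \<le> G n x"
    and f_lim: "\<And>x. (\<lambda>n. f n x) \<longlonglongrightarrow> h x" and G_lim: "\<And>x. (\<lambda>n. G n x) \<longlonglongrightarrow> g x"
    and sum_G_lim: "(\<lambda>n. infsum (G n) UNIV) \<longlonglongrightarrow> infsum g UNIV"
  shows "(\<lambda>n. infsum (f n) UNIV) \<longlonglongrightarrow> infsum h UNIV"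
proof (rule tendstoI)
  fix e :: real
  assume "0 < e"
  have h_dom: "\<bar>h x\<bar> \<le> g x" for x
    using dominated by (intro LIMSEQ_le[OF tendsto_rabs[OF f_lim] G_lim]) auto
  have f_summable: "f n summable_on UNIV" for n
    using summable_on_comparison_abs[OF G_summable] dominated by blast
  have h_summable: "h summable_on UNIV"
    using summable_on_comparison_abs[OF g_summable] h_dom by blast
  obtain F where "finite F" and F: "infsum g (- F) < e / 4"
    using infsum_tail_small[OF g_summable, of "e / 4"] \<open>0 < e\<close> by auto
  have tail_le: "\<bar>infsum k (- F)\<bar> \<le> infsum K (- F)"
    if "K summable_on UNIV" "\<And>x. \<bar>k x\<bar> \<le> K x" for k K :: "'i \<Rightarrow> real"
    using infsum_split_finite(1)[OF that(1) \<open>finite F\<close>] that(2) by (rule abs_infsum_le)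
  define B where "B n = infsum (G n) UNIV - sum (G n) F + \<bar>\<Sum>x\<in>F. f n x - h x\<bar>" for n
  have "B \<longlonglongrightarrow> infsum g UNIV - sum g F + \<bar>\<Sum>x\<in>F. h x - h x\<bar>"
    unfolding B_def by (intro tendsto_intros sum_G_lim G_lim f_lim)
  moreover have "infsum g UNIV - sum g F + \<bar>\<Sum>x\<in>F. h x - h x\<bar> < e / 2"
    using infsum_split_finite[OF g_summable \<open>finite F\<close>] F \<open>0 < e\<close> by simp
  ultimately have "eventually (\<lambda>n. B n < e / 2) sequentially"
    by (rule order_tendstoD)
  then show "eventually (\<lambda>n. dist (infsum (f n) UNIV) (infsum h UNIV) < e) sequentially"
  proof eventually_elim
    case (elim n)
    have "infsum (f n) UNIV - infsum h UNIV
        = (\<Sum>x\<in>F. f n x - h x) + infsum (f n) (- F) - infsum h (- F)"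
      using infsum_split_finite(2)[OF f_summable \<open>finite F\<close>]
        infsum_split_finite(2)[OF h_summable \<open>finite F\<close>] by (simp add: sum_subtractf)
    moreover have "\<bar>infsum (f n) (- F)\<bar> \<le> infsum (G n) UNIV - sum (G n) F"
      using tail_le[OF G_summable dominated] infsum_split_finite(2)[OF G_summable \<open>finite F\<close>]
      by simp
    moreover have "\<bar>infsum h (- F)\<bar> < e / 4"
      using tail_le[OF g_summable h_dom] F by simp
    ultimately show ?case
      using elim unfolding B_def dist_real_def by linarith
  qed
qed

lemma tendsto_infsum_dominated_const:
  fixes f :: "nat \<Rightarrow> 'i \<Rightarrow> real"
  assumes "g summable_on UNIV" "\<And>n x. \<bar>f n x\<bar> \<le> g x" "\<And>x. (\<lambda>n. f n x) \<longlonglongrightarrow> h x"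
  shows "(\<lambda>n. infsum (f n) UNIV) \<longlonglongrightarrow> infsum h UNIV"
  using tendsto_infsum_dominated[of "\<lambda>_. g" g f h] assms by auto

lemma infsum_le_lim_fatou:
  fixes f :: "nat \<Rightarrow> 'i \<Rightarrow> real"
  assumes nonneg: "\<And>n x. 0 \<le> f n x" and "\<And>n. f n summable_on UNIV"
    and lim: "\<And>x. (\<lambda>n. f n x) \<longlonglongrightarrow> h x"
    and sum_lim: "(\<lambda>n. infsum (f n) UNIV) \<longlonglongrightarrow> L"
  shows "h summable_on UNIV" "infsum h UNIV \<le> L"
proof -
  have finite_le: "sum h F \<le> L" if "finite F" for F
  proof -
    have "(\<lambda>n. sum (f n) F) \<longlonglongrightarrow> sum h F"
      by (intro tendsto_sum lim)
    moreover have "sum (f n) F \<le> infsum (f n) UNIV" for n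
      using finite_sum_le_infsum[OF assms(2) that] nonneg by auto
    ultimately show ?thesis
      using sum_lim by (intro LIMSEQ_le) auto
  qed
  have "0 \<le> h x" for x
    using lim[of x] nonneg by (intro LIMSEQ_le_const) auto
  then show "h summable_on UNIV"
    using finite_le by (intro nonneg_bdd_above_summable_on bdd_aboveI2) auto
  then show "infsum h UNIV \<le> L"
    using finite_le infsum_le_finite_sums by blast
qed

lemma pointwise_convergent_subseq_nat:
  fixes f :: "nat \<Rightarrow> nat \<Rightarrow> real"
  assumes "\<And>n i. f n i \<in> {0..1}"
  obtains r g where "strict_mono r" "\<And>i. (\<lambda>n. f (r n) i) \<longlonglongrightarrow> g i" "\<And>i. g i \<in> {0..1}"
proof -
  define S :: "(nat \<Rightarrow> real) set" where "S = PiE UNIV (\<lambda>_. {0..1})"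
  have "compactin (product_topology (\<lambda>_. euclidean) UNIV) S"
    unfolding S_def by (simp add: compactin_PiE)
  then have "seq_compact S"
    by (simp add: euclidean_product_topology compact_eq_seq_compact_metric)
  moreover have "\<forall>n. f n \<in> S"
    using assms by (auto simp: S_def)
  ultimately obtain g r where "g \<in> S" "strict_mono r" "(f \<circ> r) \<longlonglongrightarrow> g"
    unfolding seq_compact_def by blast
  moreover have "(\<lambda>n. f (r n) i) \<longlonglongrightarrow> g i" for i
  proof -
    have "isCont (\<lambda>x :: nat \<Rightarrow> real. x i) g"
      using continuous_on_eq_continuous_at[of UNIV "\<lambda>x :: nat \<Rightarrow> real. x i"]
        continuous_on_product_coordinates by simp
    from isCont_tendsto_compose[OF this \<open>(f \<circ> r) \<longlonglongrightarrow> g\<close>] show ?thesis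
      by (simp add: o_def)
  qed
  moreover have "g i \<in> {0..1}" for i
    using \<open>g \<in> S\<close> by (auto simp: S_def)
  ultimately show ?thesis
    using that by blast
qed

lemma pointwise_convergent_subseq:
  fixes f :: "nat \<Rightarrow> 'a \<Rightarrow> real"
  assumes "countable (UNIV :: 'a set)" "\<And>n x. f n x \<in> {0..1}"
  obtains r g where "strict_mono r" "\<And>x. (\<lambda>n. f (r n) x) \<longlonglongrightarrow> g x" "\<And>x. g x \<in> {0..1}"
proof -
  obtain enc :: "'a \<Rightarrow> nat" where "inj enc"
    using assms(1) by (rule countableE)
  obtain r g where "strict_mono r" "\<And>i. (\<lambda>n. f (r n) (inv enc i)) \<longlonglongrightarrow> g i" "\<And>i. g i \<in> {0..1}"
    using pointwise_convergent_subseq_nat[of "\<lambda>n i. f n (inv enc i)"] assms(2) by metis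
  moreover have "(\<lambda>n. f (r n) x) \<longlonglongrightarrow> g (enc x)" for x
    using \<open>\<And>i. (\<lambda>n. f (r n) (inv enc i)) \<longlonglongrightarrow> g i\<close>[of "enc x"] \<open>inj enc\<close> by simp
  ultimately show ?thesis
    using that[of r "g \<circ> enc"] by auto
qed

section \<open>Energy, Laplacian and Green's formula on a weighted graph\<close>

lemma p_superharmonic_add_const:
  "p_superharmonic p b m (\<lambda>x. f x + c) \<longleftrightarrow> p_superharmonic p b m f"
  by (simp add: p_superharmonic_def in_Fp_def p_laplacian_def)

lemma fin_supp_subset:
  assumes "fin_supp \<phi>" "\<And>x. \<phi> x = 0 \<Longrightarrow> \<psi> x = 0"
  shows "fin_supp \<psi>"
  using assms(1) unfolding fin_supp_def by (rule finite_subset[rotated]) (use assms(2) in auto)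

locale p_graph =
  fixes b :: "'a \<Rightarrow> 'a \<Rightarrow> real" and m :: "'a \<Rightarrow> real" and p :: real
  assumes countable_vertices: "countable (UNIV :: 'a set)"
    and b_sym: "\<And>x y. b x y = b y x" and b_nonneg: "\<And>x y. 0 \<le> b x y"
    and b_diag: "\<And>x. b x x = 0" and b_summable: "\<And>x. (\<lambda>y. b x y) summable_on UNIV"
    and m_pos: "\<And>x. 0 < m x"
    and connected: "\<And>x y. (x, y) \<in> {(u, v). 0 < b u v}\<^sup>*"
    and p_gt_1: "1 < p"
begin

definition edge_energy :: "('a \<Rightarrow> real) \<Rightarrow> 'a \<times> 'a \<Rightarrow> real" where
  "edge_energy f z = b (fst z) (snd z) * \<bar>f (fst z) - f (snd z)\<bar> powr p"

definition finite_energy :: "('a \<Rightarrow> real) \<Rightarrow> bool" where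
  "finite_energy f \<longleftrightarrow> edge_energy f summable_on UNIV"

text \<open>The sum runs over ordered pairs, so \<open>total_energy f\<close> is twice the \<open>p\<close>-energy.\<close>

definition total_energy :: "('a \<Rightarrow> real) \<Rightarrow> real" where
  "total_energy f = infsum (edge_energy f) UNIV"

definition laplacian :: "('a \<Rightarrow> real) \<Rightarrow> 'a \<Rightarrow> real" where
  "laplacian f x = infsum (\<lambda>y. b x y * signed_pow (f x - f y) (p - 1)) UNIV"

definition energy_pairing :: "('a \<Rightarrow> real) \<Rightarrow> ('a \<Rightarrow> real) \<Rightarrow> 'a \<times> 'a \<Rightarrow> real" where
  "energy_pairing u g z =
     b (fst z) (snd z) * signed_pow (u (fst z) - u (snd z)) (p - 1) * (g (fst z) - g (snd z))"

lemma edge_energy_nonneg: "0 \<le> edge_energy f z"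
  by (simp add: edge_energy_def b_nonneg)

lemma total_energy_nonneg: "0 \<le> total_energy f"
  unfolding total_energy_def by (rule infsum_nonneg) (simp add: edge_energy_nonneg)

lemma edge_energy_le_total_energy:
  assumes "finite_energy f"
  shows "edge_energy f z \<le> total_energy f"
proof -
  have "(edge_energy f has_sum total_energy f) UNIV"
    using assms by (simp add: finite_energy_def total_energy_def)
  then show ?thesis
    by (rule has_sum_ge_element) (simp_all add: edge_energy_nonneg)
qed

lemma energy_pairing_self: "energy_pairing u u = edge_energy u"
  using signed_pow_mult_self[of _ "p - 1"]
  by (simp add: fun_eq_iff energy_pairing_def edge_energy_def mult.assoc)

lemma abs_energy_pairing:
  "\<bar>energy_pairing u g (x, y)\<bar> = b x y * (\<bar>u x - u y\<bar> powr (p - 1) * \<bar>g x - g y\<bar>)"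
  by (simp add: energy_pairing_def abs_mult abs_signed_pow b_nonneg)

lemma case_prod_edge_energy: "(\<lambda>(x, y). b x y * \<bar>f x - f y\<bar> powr p) = edge_energy f"
  by (simp add: fun_eq_iff edge_energy_def)

lemma in_Dp_iff: "in_Dp p b (\<lambda>_. 0) f \<longleftrightarrow> finite_energy f"
  by (simp add: in_Dp_def finite_energy_def case_prod_edge_energy)

lemma energy_eq: "energy p b (\<lambda>_. 0) f = total_energy f / 2"
  by (simp add: energy_def total_energy_def case_prod_edge_energy)

lemma norm_op_less_iff:
  assumes "0 < e"
  shows "norm_op p b (\<lambda>_. 0) x0 f < e \<longleftrightarrow> total_energy f / 2 + \<bar>f x0\<bar> powr p < e powr p"
proof -
  have "0 \<le> total_energy f / 2 + \<bar>f x0\<bar> powr p"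
    using total_energy_nonneg[of f] by simp
  then show ?thesis
    using assms p_gt_1 by (simp add: norm_op_def energy_eq powr_inverse_less_iff)
qed

lemma p_laplacian_eq: "p_laplacian p b m f x = laplacian f x / m x"
  by (simp add: p_laplacian_def laplacian_def)

lemma p_superharmonic_iff:
  "p_superharmonic p b m f \<longleftrightarrow> in_Fp p b f \<and> (\<forall>x. 0 \<le> laplacian f x)"
proof -
  have "0 \<le> laplacian f x / m x \<longleftrightarrow> 0 \<le> laplacian f x" for x
    using m_pos[of x] by (simp add: zero_le_divide_iff)
  then show ?thesis
    by (simp add: p_superharmonic_def p_laplacian_eq)
qed

lemma p_harmonic_iff: "p_harmonic p b m f \<longleftrightarrow> in_Fp p b f \<and> (\<forall>x. laplacian f x = 0)"
  using m_pos by (simp add: p_harmonic_def p_laplacian_eq less_imp_neq[symmetric])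

lemma laplacian_summable:
  assumes "in_Fp p b f"
  shows "(\<lambda>y. b x y * signed_pow (f x - f y) (p - 1)) summable_on UNIV"
proof (rule summable_on_comparison_abs)
  show "(\<lambda>y. b x y * \<bar>f x - f y\<bar> powr (p - 1)) summable_on UNIV"
    using assms by (simp add: in_Fp_def)
  show "\<bar>b x y * signed_pow (f x - f y) (p - 1)\<bar> \<le> b x y * \<bar>f x - f y\<bar> powr (p - 1)" for y
    by (simp add: abs_mult abs_signed_pow b_nonneg)
qed

lemma in_Fp_if_bounded:
  assumes "\<And>x. \<bar>f x\<bar> \<le> M"
  shows "in_Fp p b f"
  unfolding in_Fp_def
proof
  fix x
  have "b x y * \<bar>f x - f y\<bar> powr (p - 1) \<le> b x y * (2 * M) powr (p - 1)" for y
    using assms[of x] assms[of y] p_gt_1 by (intro mult_left_mono powr_mono2) (auto simp: b_nonneg)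
  then show "(\<lambda>y. b x y * \<bar>f x - f y\<bar> powr (p - 1)) summable_on UNIV"
    by (rule summable_on_comparison_test[OF summable_on_cmult_left[OF b_summable]]) (simp add: b_nonneg)
qed

lemma eq_if_eq_on_edges:
  assumes "\<And>x y. 0 < b x y \<Longrightarrow> f x = f y"
  shows "f x = f y"
  using connected[of x y]
proof induction
  case (step y z)
  then show ?case
    using assms[of y z] by simp
qed simp

lemma is_constant_if_eq_on_edges:
  assumes "\<And>x y. 0 < b x y \<Longrightarrow> f x = f y"
  shows "is_constant f"
proof -
  have "f x = f undefined" for x
    by (rule eq_if_eq_on_edges[OF assms])
  then show ?thesis
    unfolding is_constant_def by blast
qed

lemma edge_energy_const: "edge_energy (\<lambda>_. c) = (\<lambda>_. 0)"
  by (simp add: fun_eq_iff edge_energy_def)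

lemma is_constant_iff_total_energy_eq_0:
  assumes "finite_energy f"
  shows "is_constant f \<longleftrightarrow> total_energy f = 0"
proof
  assume "is_constant f"
  then obtain k where "f = (\<lambda>_. k)"
    by (auto simp: is_constant_def)
  then show "total_energy f = 0"
    by (simp add: total_energy_def edge_energy_const)
next
  assume "total_energy f = 0"
  have "f x = f y" if "0 < b x y" for x y
  proof -
    have "edge_energy f (x, y) = 0"
      using nonneg_infsum_le_0D[of "edge_energy f" UNIV "(x, y)"] \<open>total_energy f = 0\<close> assms
        edge_energy_nonneg by (simp add: total_energy_def finite_energy_def)
    then show ?thesis
      using that by (simp add: edge_energy_def)
  qed
  then show "is_constant f"
    by (rule is_constant_if_eq_on_edges)
qed

lemma edge_energy_scale: "edge_energy (\<lambda>x. c * f x) = (\<lambda>z. \<bar>c\<bar> powr p * edge_energy f z)"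
  by (simp add: fun_eq_iff edge_energy_def powr_mult abs_mult flip: right_diff_distrib)

lemma edge_energy_const_diff: "edge_energy (\<lambda>x. c - f x) = edge_energy f"
  by (simp add: fun_eq_iff edge_energy_def abs_minus_commute)

lemma edge_energy_uminus: "edge_energy (\<lambda>x. - f x) = edge_energy f"
  using edge_energy_const_diff[of 0 f] by simp

lemma total_energy_scale: "total_energy (\<lambda>x. c * f x) = \<bar>c\<bar> powr p * total_energy f"
  by (simp add: total_energy_def edge_energy_scale infsum_cmult_right')

lemma finite_energy_scale: "finite_energy f \<Longrightarrow> finite_energy (\<lambda>x. c * f x)"
  by (simp add: finite_energy_def edge_energy_scale summable_on_cmult_right)

lemma finite_energy_lipschitz:
  assumes "finite_energy f" "\<And>x y. \<bar>g x - g y\<bar> \<le> \<bar>f x - f y\<bar>"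
  shows "finite_energy g" "total_energy g \<le> total_energy f"
proof -
  have le: "edge_energy g z \<le> edge_energy f z" for z
    using assms(2)[of "fst z" "snd z"] p_gt_1
    by (auto simp: edge_energy_def b_nonneg intro!: mult_left_mono powr_mono2)
  show "finite_energy g"
    using assms(1) le edge_energy_nonneg unfolding finite_energy_def
    by (rule summable_on_comparison_test)
  then show "total_energy g \<le> total_energy f"
    using assms(1) le unfolding total_energy_def finite_energy_def by (rule infsum_mono)
qed

lemma edge_weight_summable_near:
  assumes "finite S"
  shows "(\<lambda>z. if fst z \<in> S \<or> snd z \<in> S then b (fst z) (snd z) else 0) summable_on UNIV"
proof -
  define R where "R z = (\<Sum>s\<in>S. if fst z = s then b s (snd z) else 0)
    + (\<Sum>s\<in>S. if snd z = s then b s (fst z) else 0)" for z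
  have row: "((\<lambda>z. if fst z = s then b s (snd z) else 0) has_sum infsum (b s) UNIV) UNIV"
    and col: "((\<lambda>z. if snd z = s then b s (fst z) else 0) has_sum infsum (b s) UNIV) UNIV" for s
    by (rule has_sum_row has_sum_col, rule has_sum_infsum, rule b_summable)+
  have "R summable_on UNIV"
    unfolding R_def using has_sum_sum[OF assms row] has_sum_sum[OF assms col]
    by (intro summable_on_add has_sum_imp_summable)
  moreover have "(if fst z \<in> S \<or> snd z \<in> S then b (fst z) (snd z) else 0) \<le> R z" for z
  proof -
    have "R z = (if fst z \<in> S then b (fst z) (snd z) else 0)
        + (if snd z \<in> S then b (snd z) (fst z) else 0)"
      using assms by (simp add: R_def sum.delta')
    then show ?thesis
      using b_sym[of "fst z" "snd z"] b_nonneg[of "fst z" "snd z"] by auto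
  qed
  ultimately show ?thesis
    by (rule summable_on_comparison_test) (simp add: b_nonneg)
qed

lemma finite_energy_if_fin_supp:
  assumes "fin_supp f"
  shows "finite_energy f"
proof -
  define S where "S = {x. f x \<noteq> 0}"
  have "finite S"
    using assms by (simp add: fin_supp_def S_def)
  define M where "M = (\<Sum>s\<in>S. \<bar>f s\<bar>)"
  have M: "\<bar>f x\<bar> \<le> M" for x
  proof (cases "x \<in> S")
    case True
    then show ?thesis
      using \<open>finite S\<close> unfolding M_def by (intro member_le_sum) auto
  next
    case False
    then show ?thesis
      by (simp add: M_def S_def sum_nonneg)
  qed
  have bound: "edge_energy f z
      \<le> (2 * M) powr p * (if fst z \<in> S \<or> snd z \<in> S then b (fst z) (snd z) else 0)" for z
  proof -
    have "\<bar>f (fst z) - f (snd z)\<bar> powr p \<le> (2 * M) powr p"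
      using M[of "fst z"] M[of "snd z"] p_gt_1 by (intro powr_mono2) auto
    then show ?thesis
      by (auto simp: edge_energy_def S_def b_nonneg mult.commute intro: mult_left_mono)
  qed
  show ?thesis
    unfolding finite_energy_def using edge_weight_summable_near[OF \<open>finite S\<close>] bound edge_energy_nonneg
    by (rule summable_on_comparison_test[OF summable_on_cmult_right])
qed

lemma edge_energy_diff_le:
  "edge_energy (\<lambda>x. f x - g x) z \<le> 2 powr p * (edge_energy f z + edge_energy g z)"
  using mult_left_mono[OF abs_diff_powr_le[of p "f (fst z) - f (snd z)" "g (fst z) - g (snd z)"],
      of "b (fst z) (snd z)"] p_gt_1
  by (simp add: edge_energy_def b_nonneg algebra_simps)

lemma finite_energy_diff:
  assumes "finite_energy f" "finite_energy g"
  shows "finite_energy (\<lambda>x. f x - g x)"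
  using assms edge_energy_diff_le edge_energy_nonneg unfolding finite_energy_def
  by (rule summable_on_comparison_test[OF summable_on_cmult_right[OF summable_on_add]])

lemma green_formula:
  assumes "in_Fp p b u" "finite S" "\<And>x. x \<notin> S \<Longrightarrow> \<psi> x = 0"
  shows "(energy_pairing u \<psi> has_sum 2 * (\<Sum>s\<in>S. \<psi> s * laplacian u s)) UNIV"
proof -
  define r where "r s y = \<psi> s * (b s y * signed_pow (u s - u y) (p - 1))" for s y
  have r: "(r s has_sum \<psi> s * laplacian u s) UNIV" for s
    unfolding r_def laplacian_def
    by (rule has_sum_cmult_right[OF has_sum_infsum[OF laplacian_summable[OF assms(1)]]])
  define R where "R z = (\<Sum>s\<in>S. if fst z = s then r s (snd z) else 0)
    + (\<Sum>s\<in>S. if snd z = s then r s (fst z) else 0)" for z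
  have "(R has_sum 2 * (\<Sum>s\<in>S. \<psi> s * laplacian u s)) UNIV"
    unfolding R_def mult_2
    by (intro has_sum_add has_sum_sum[OF assms(2)] has_sum_row has_sum_col r)
  moreover have "R z = energy_pairing u \<psi> z" for z
  proof -
    obtain x y where z: "z = (x, y)"
      by force
    have "R z = (if x \<in> S then r x y else 0) + (if y \<in> S then r y x else 0)"
      using assms(2) by (simp add: R_def z sum.delta')
    moreover have "signed_pow (u y - u x) (p - 1) = - signed_pow (u x - u y) (p - 1)"
      by (metis minus_diff_eq signed_pow_minus)
    ultimately show ?thesis
      using assms(3)[of x] assms(3)[of y] b_sym[of y x]
      by (auto simp: r_def energy_pairing_def z algebra_simps)
  qed
  ultimately show ?thesis
    by (metis ext)
qed

lemma superharmonic_pairing_nonneg: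
  assumes "in_Fp p b u" "\<And>x. 0 \<le> laplacian u x" "fin_supp \<psi>" "\<And>x. 0 \<le> \<psi> x"
  shows "energy_pairing u \<psi> summable_on UNIV" "0 \<le> infsum (energy_pairing u \<psi>) UNIV"
proof -
  have "finite {x. \<psi> x \<noteq> 0}"
    using assms(3) by (simp add: fin_supp_def)
  from green_formula[OF assms(1) this]
  have "(energy_pairing u \<psi> has_sum 2 * (\<Sum>s | \<psi> s \<noteq> 0. \<psi> s * laplacian u s)) UNIV"
    by simp
  moreover have "0 \<le> (\<Sum>s | \<psi> s \<noteq> 0. \<psi> s * laplacian u s)"
    using assms(2,4) by (intro sum_nonneg mult_nonneg_nonneg) auto
  ultimately show "energy_pairing u \<psi> summable_on UNIV" "0 \<le> infsum (energy_pairing u \<psi>) UNIV"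
    by (auto simp: summable_on_def infsumI)
qed

lemma young_edge_bound:
  assumes "\<And>s t. 0 \<le> s \<Longrightarrow> 0 \<le> t \<Longrightarrow> s powr (p - 1) * t \<le> \<alpha> * s powr p + \<beta> * t powr p"
  shows "b x y * (\<bar>u x - u y\<bar> powr (p - 1) * \<bar>g x - g y\<bar>)
           \<le> \<alpha> * edge_energy u (x, y) + \<beta> * edge_energy g (x, y)"
  using mult_left_mono[OF assms[of "\<bar>u x - u y\<bar>" "\<bar>g x - g y\<bar>"] b_nonneg[of x y]]
  by (simp add: edge_energy_def algebra_simps)

lemma infsum_le_energies:
  assumes "finite_energy u" "finite_energy g"
    and bound: "\<And>z. \<bar>F z\<bar> \<le> \<alpha> * edge_energy u z + \<beta> * edge_energy g z"
  shows "F summable_on UNIV" "infsum F UNIV \<le> \<alpha> * total_energy u + \<beta> * total_energy g"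
proof -
  have u: "(\<lambda>z. \<alpha> * edge_energy u z) summable_on UNIV"
    and g: "(\<lambda>z. \<beta> * edge_energy g z) summable_on UNIV"
    using assms(1,2) by (simp_all add: finite_energy_def summable_on_cmult_right)
  show F: "F summable_on UNIV"
    using summable_on_add[OF u g] bound by (rule summable_on_comparison_abs)
  have "infsum F UNIV \<le> infsum (\<lambda>z. \<alpha> * edge_energy u z + \<beta> * edge_energy g z) UNIV"
    using F summable_on_add[OF u g] by (rule infsum_mono) (use bound abs_le_D1 in blast)
  also have "\<dots> = \<alpha> * total_energy u + \<beta> * total_energy g"
    by (simp add: infsum_add[OF u g] total_energy_def infsum_cmult_right')
  finally show "infsum F UNIV \<le> \<alpha> * total_energy u + \<beta> * total_energy g" .
qed

section \<open>Liouville theorems on parabolic graphs\<close>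

lemma p_parabolic_iff_small_energy:
  "p_parabolic p b (\<lambda>_. 0) \<longleftrightarrow>
     (\<forall>K. finite K \<longrightarrow> (\<forall>e>0. \<exists>\<phi>. fin_supp \<phi> \<and> (\<forall>x\<in>K. 1 \<le> \<phi> x) \<and> total_energy \<phi> < e))"
proof -
  have "(INF \<phi>\<in>A. energy p b (\<lambda>_. 0) \<phi>) = 0 \<longleftrightarrow> (\<forall>e>0. \<exists>\<phi>\<in>A. total_energy \<phi> < e)"
    if "A = {\<phi>. fin_supp \<phi> \<and> (\<forall>x\<in>K. 1 \<le> \<phi> x)}" "finite K" for A K
  proof -
    have "(\<lambda>x. if x \<in> K then 1 else 0) \<in> A"
      using that by (auto simp: fin_supp_def)
    then have "(INF \<phi>\<in>A. energy p b (\<lambda>_. 0) \<phi>) = 0 \<longleftrightarrow> (\<forall>e>0. \<exists>\<phi>\<in>A. total_energy \<phi> / 2 < e)"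
      by (subst INF_eq_0_iff) (auto simp: energy_eq total_energy_nonneg)
    also have "\<dots> \<longleftrightarrow> (\<forall>e>0. \<exists>\<phi>\<in>A. total_energy \<phi> < e)"
    proof (intro iffI allI impI)
      fix e :: real
      assume "0 < e"
      show "\<exists>\<phi>\<in>A. total_energy \<phi> < e" if "\<forall>e>0. \<exists>\<phi>\<in>A. total_energy \<phi> / 2 < e"
        using that \<open>0 < e\<close> half_gt_zero[OF \<open>0 < e\<close>] by fastforce
      show "\<exists>\<phi>\<in>A. total_energy \<phi> / 2 < e" if "\<forall>e>0. \<exists>\<phi>\<in>A. total_energy \<phi> < e"
        using that \<open>0 < e\<close> by (metis divide_less_eq_numeral1(1) mult_2_right add_pos_pos)
    qed
    finally show ?thesis .
  qed
  then show ?thesis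
    unfolding p_parabolic_def by auto
qed

lemma parabolic_cutoff:
  assumes "p_parabolic p b (\<lambda>_. 0)" "finite K" "0 < e"
  obtains \<phi> where "fin_supp \<phi>" "\<And>x. 0 \<le> \<phi> x \<and> \<phi> x \<le> 1" "\<And>x. x \<in> K \<Longrightarrow> \<phi> x = 1"
    "total_energy \<phi> < e"
proof -
  obtain \<phi> where \<phi>: "fin_supp \<phi>" "\<forall>x\<in>K. 1 \<le> \<phi> x" "total_energy \<phi> < e"
    using assms p_parabolic_iff_small_energy by blast
  define \<psi> where "\<psi> x = min 1 (max 0 (\<phi> x))" for x
  have "\<bar>\<psi> x - \<psi> y\<bar> \<le> \<bar>\<phi> x - \<phi> y\<bar>" for x y
    by (auto simp: \<psi>_def)
  then have "total_energy \<psi> \<le> total_energy \<phi>"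
    by (rule finite_energy_lipschitz[OF finite_energy_if_fin_supp[OF \<phi>(1)]])
  moreover have "fin_supp \<psi>"
    using \<phi>(1) by (rule fin_supp_subset) (simp add: \<psi>_def)
  moreover have "0 \<le> \<psi> x \<and> \<psi> x \<le> 1" "x \<in> K \<Longrightarrow> \<psi> x = 1" for x
    using \<phi>(2) by (auto simp: \<psi>_def)
  ultimately show ?thesis
    using that \<phi>(3) by fastforce
qed

lemma nonparabolic_capacity:
  assumes "\<not> p_parabolic p b (\<lambda>_. 0)"
  obtains K c where "finite K" "0 < c"
    "\<And>\<phi>. fin_supp \<phi> \<Longrightarrow> (\<And>x. x \<in> K \<Longrightarrow> 1 \<le> \<phi> x) \<Longrightarrow> c \<le> total_energy \<phi>"
proof -
  from assms obtain K c where "finite K" "0 < c"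
    and "\<forall>\<phi>. fin_supp \<phi> \<and> (\<forall>x\<in>K. 1 \<le> \<phi> x) \<longrightarrow> \<not> total_energy \<phi> < c"
    unfolding p_parabolic_iff_small_energy by blast
  then show ?thesis
    using that[of K c] by (simp add: not_less)
qed

text \<open>Picone's inequality turns the pairing of a positive superharmonic \<open>v\<close> with
  \<open>\<phi>\<^sup>p / v\<^sup>p\<^sup>-\<^sup>1\<close> into a lower bound for the energy of \<open>\<phi>\<close>.\<close>

lemma picone_defect_le_energy:
  assumes "p_superharmonic p b m v" "\<And>x. 0 < v x" "fin_supp \<phi>" "\<And>x. 0 \<le> \<phi> x"
  shows "edge_energy \<phi> z - energy_pairing v (\<lambda>x. \<phi> x powr p / v x powr (p - 1)) z
           \<le> total_energy \<phi>"
proof -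
  define \<psi> where "\<psi> x = \<phi> x powr p / v x powr (p - 1)" for x
  have "fin_supp \<psi>"
    using assms(3) by (rule fin_supp_subset) (simp add: \<psi>_def)
  then have pairing: "energy_pairing v \<psi> summable_on UNIV" "0 \<le> infsum (energy_pairing v \<psi>) UNIV"
    using superharmonic_pairing_nonneg[of v \<psi>] assms(1) by (auto simp: p_superharmonic_iff \<psi>_def)
  define D where "D z = edge_energy \<phi> z - energy_pairing v \<psi> z" for z
  have D_nonneg: "0 \<le> D z" for z
  proof -
    obtain x y where z: "z = (x, y)"
      by force
    have "signed_pow (v x - v y) (p - 1) * (\<psi> x - \<psi> y) \<le> \<bar>\<phi> x - \<phi> y\<bar> powr p"
      unfolding \<psi>_def
      using picone[OF p_gt_1 assms(2)[of x] assms(2)[of y] assms(4)[of x] assms(4)[of y]] .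
    then show ?thesis
      using mult_left_mono[OF _ b_nonneg[of x y]]
      by (simp add: D_def z edge_energy_def energy_pairing_def mult.assoc)
  qed
  have "(D has_sum total_energy \<phi> - infsum (energy_pairing v \<psi>) UNIV) UNIV"
    unfolding D_def total_energy_def using assms(3) pairing(1)
    by (intro has_sum_diff) (auto simp: finite_energy_def[symmetric] finite_energy_if_fin_supp)
  then have "D z \<le> total_energy \<phi> - infsum (energy_pairing v \<psi>) UNIV"
    using D_nonneg by (rule has_sum_ge_element) simp
  then show ?thesis
    using pairing(2) by (simp add: D_def \<psi>_def[abs_def])
qed

theorem parabolic_superharmonic_bounded_below_constant:
  assumes "p_parabolic p b (\<lambda>_. 0)" "p_superharmonic p b m u" "bdd_below (range u)"
  shows "is_constant u"
proof -
  obtain L where L: "\<And>x. L \<le> u x"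
    using assms(3) by (auto simp: bdd_below_def)
  define v where "v x = u x + (1 - L)" for x
  have v_pos: "0 < v x" for x
    using L[of x] by (simp add: v_def)
  have v: "p_superharmonic p b m v"
    using assms(2) by (simp add: v_def[abs_def] p_superharmonic_add_const)
  have "v x = v y" if "0 < b x y" for x y
  proof (rule ccontr)
    assume "v x \<noteq> v y"
    define \<kappa> where "\<kappa> = - (b x y * signed_pow (v x - v y) (p - 1) *
      (1 / v x powr (p - 1) - 1 / v y powr (p - 1)))"
    have "0 < \<kappa>"
      using signed_pow_diff_mult_inverse_neg[OF p_gt_1 v_pos v_pos \<open>v x \<noteq> v y\<close>] \<open>0 < b x y\<close>
      by (simp add: \<kappa>_def mult.assoc mult_pos_neg)
    have "finite {x, y}"
      by simp
    then obtain \<phi> where \<phi>: "fin_supp \<phi>" "\<And>z. 0 \<le> \<phi> z \<and> \<phi> z \<le> 1" "\<And>z. z \<in> {x, y} \<Longrightarrow> \<phi> z = 1"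
      "total_energy \<phi> < \<kappa>"
      by (rule parabolic_cutoff[OF assms(1) _ \<open>0 < \<kappa>\<close>]) blast
    have "\<kappa> \<le> total_energy \<phi>"
      using picone_defect_le_energy[OF v v_pos \<phi>(1), of "(x, y)"] \<phi>(2) \<phi>(3)[of x] \<phi>(3)[of y]
      by (simp add: \<kappa>_def edge_energy_def energy_pairing_def)
    then show False
      using \<phi>(4) by simp
  qed
  then have "u x = u y" for x y
    using eq_if_eq_on_edges[of v x y] by (simp add: v_def)
  then show ?thesis
    unfolding is_constant_def by blast
qed

text \<open>Testing the superharmonicity of \<open>u\<close> against \<open>\<phi> \<cdot> T(u)\<close> for a nonincreasing truncation \<open>T\<close>
  controls every edge term by the energies of \<open>u\<close> and \<open>\<phi>\<close>.\<close>

lemma truncated_test_edge_bound: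
  assumes u: "p_superharmonic p b m u" "finite_energy u"
    and T_antimono: "\<And>s t. s \<le> t \<Longrightarrow> T t \<le> T s" and T_range: "\<And>s. 0 \<le> T s \<and> T s \<le> M"
    and \<phi>: "fin_supp \<phi>" "\<And>x. 0 \<le> \<phi> x" and "0 < \<delta>"
  shows "b x y * signed_pow (u x - u y) (p - 1) * \<phi> x * (T (u y) - T (u x))
           \<le> M * \<delta> * total_energy u + M / \<delta> powr (p - 1) * total_energy \<phi>"
proof -
  define \<psi> where "\<psi> x = \<phi> x * T (u x)" for x
  have "fin_supp \<psi>"
    using \<phi>(1) by (rule fin_supp_subset) (simp add: \<psi>_def)
  then have G: "energy_pairing u \<psi> summable_on UNIV" "0 \<le> infsum (energy_pairing u \<psi>) UNIV"
    using superharmonic_pairing_nonneg[of u \<psi>] u(1) \<phi>(2) T_range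
    by (auto simp: p_superharmonic_iff \<psi>_def)
  define N where "N z = b (fst z) (snd z) * signed_pow (u (fst z) - u (snd z)) (p - 1)
    * \<phi> (fst z) * (T (u (snd z)) - T (u (fst z)))" for z
  define B where "B z = T (u (snd z)) * energy_pairing u \<phi> z" for z
  have N_eq: "N z = B z - energy_pairing u \<psi> z" for z
    by (simp add: N_def B_def energy_pairing_def \<psi>_def algebra_simps)
  have N_nonneg: "0 \<le> N z" for z
  proof -
    have "0 \<le> signed_pow (u (fst z) - u (snd z)) (p - 1) * (T (u (snd z)) - T (u (fst z)))"
      using T_antimono by (rule signed_pow_mult_antimono_nonneg)
    then have "0 \<le> b (fst z) (snd z) * (\<phi> (fst z) *
        (signed_pow (u (fst z) - u (snd z)) (p - 1) * (T (u (snd z)) - T (u (fst z)))))"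
      using b_nonneg \<phi>(2) by (metis mult_nonneg_nonneg)
    then show ?thesis
      by (simp add: N_def mult_ac)
  qed
  have "\<bar>B z\<bar> \<le> M * (\<delta> * edge_energy u z + 1 / \<delta> powr (p - 1) * edge_energy \<phi> z)" for z
    unfolding B_def abs_mult using T_range[of "u (snd z)"]
      young_edge_bound[OF young_powr_eps[OF p_gt_1 \<open>0 < \<delta>\<close>], of "fst z" "snd z" u \<phi>]
    by (intro mult_mono) (auto simp: abs_energy_pairing[of _ _ "fst z" "snd z", simplified] b_nonneg)
  then have B_bound: "\<bar>B z\<bar> \<le> M * \<delta> * edge_energy u z + M / \<delta> powr (p - 1) * edge_energy \<phi> z" for z
    by (simp add: algebra_simps)
  note B = infsum_le_energies[OF u(2) finite_energy_if_fin_supp[OF \<phi>(1)] B_bound]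
  have "(N has_sum infsum B UNIV - infsum (energy_pairing u \<psi>) UNIV) UNIV"
    unfolding N_eq[abs_def] using B(1) G(1) by (intro has_sum_diff has_sum_infsum)
  then have "N (x, y) \<le> infsum B UNIV - infsum (energy_pairing u \<psi>) UNIV"
    using N_nonneg by (rule has_sum_ge_element) simp
  then show ?thesis
    using B(2) G(2) by (simp add: N_def)
qed

theorem parabolic_superharmonic_finite_energy_constant:
  assumes "p_parabolic p b (\<lambda>_. 0)" "p_superharmonic p b m u" "finite_energy u"
  shows "is_constant u"
proof (rule is_constant_if_eq_on_edges, rule ccontr)
  fix x y
  assume "0 < b x y" "u x \<noteq> u y"
  define hi where "hi = max (u x) (u y)"
  define M where "M = hi - min (u x) (u y)"
  define T where "T s = max 0 (min M (hi - s))" for s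
  have "0 < M"
    using \<open>u x \<noteq> u y\<close> by (auto simp: M_def hi_def)
  have T_edge: "T (u y) - T (u x) = u x - u y"
    by (auto simp: T_def M_def hi_def)
  have T_antimono: "T t \<le> T s" if "s \<le> t" for s t
    using that by (auto simp: T_def)
  have T_range: "0 \<le> T s \<and> T s \<le> M" for s
    using \<open>0 < M\<close> by (auto simp: T_def)
  define \<kappa> where "\<kappa> = b x y * \<bar>u x - u y\<bar> powr p"
  have "0 < \<kappa>"
    using \<open>0 < b x y\<close> \<open>u x \<noteq> u y\<close> by (simp add: \<kappa>_def)
  obtain \<delta> where "0 < \<delta>" and "\<delta> * (M * total_energy u) < \<kappa> / 2"
    using exists_pos_mult_less[of "M * total_energy u" "\<kappa> / 2"] \<open>0 < M\<close> \<open>0 < \<kappa>\<close>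
      total_energy_nonneg[of u] by auto
  have "finite {x}" "0 < \<kappa> * \<delta> powr (p - 1) / (2 * M)"
    using \<open>0 < \<kappa>\<close> \<open>0 < M\<close> \<open>0 < \<delta>\<close> by simp_all
  then obtain \<phi> where \<phi>: "fin_supp \<phi>" "\<And>z. 0 \<le> \<phi> z \<and> \<phi> z \<le> 1" "\<And>z. z \<in> {x} \<Longrightarrow> \<phi> z = 1"
    "total_energy \<phi> < \<kappa> * \<delta> powr (p - 1) / (2 * M)"
    by (rule parabolic_cutoff[OF assms(1)]) blast
  have "0 \<le> \<phi> z" for z
    using \<phi>(2) by blast
  from truncated_test_edge_bound[where T = T and x = x and y = y,
      OF assms(2,3) T_antimono T_range \<phi>(1) this \<open>0 < \<delta>\<close>]
  have "\<kappa> \<le> M * \<delta> * total_energy u + M / \<delta> powr (p - 1) * total_energy \<phi>"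
    using \<phi>(3)[of x] by (simp add: T_edge \<kappa>_def mult.assoc signed_pow_mult_self)
  also have "M * \<delta> * total_energy u < \<kappa> / 2"
    using \<open>\<delta> * (M * total_energy u) < \<kappa> / 2\<close> by (simp add: mult_ac)
  also have "M / \<delta> powr (p - 1) * total_energy \<phi> < \<kappa> / 2"
    using \<phi>(4) \<open>0 < M\<close> \<open>0 < \<delta>\<close> by (simp add: field_simps)
  finally show False
    by simp
qed

section \<open>Parabolicity and the space \<open>D\<^sub>0\<^sup>p\<close>\<close>

lemma value_small_if_energy_small:
  "\<forall>e>0. \<exists>\<delta>>0. \<forall>g. finite_energy g \<longrightarrow> total_energy g < \<delta> \<longrightarrow> \<bar>g x0\<bar> < \<delta> \<longrightarrow> \<bar>g x\<bar> < e"
  using connected[of x0 x]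
proof (induction rule: rtrancl_induct)
  case base
  then show ?case
    by blast
next
  case (step y z)
  then have "0 < b y z"
    by simp
  show ?case
  proof (intro allI impI)
    fix e :: real
    assume "0 < e"
    then obtain \<delta>\<^sub>y where "0 < \<delta>\<^sub>y"
      and \<delta>\<^sub>y: "\<And>g. finite_energy g \<Longrightarrow> total_energy g < \<delta>\<^sub>y \<Longrightarrow> \<bar>g x0\<bar> < \<delta>\<^sub>y \<Longrightarrow> \<bar>g y\<bar> < e / 2"
      using step.IH half_gt_zero by blast
    define \<delta> where "\<delta> = min \<delta>\<^sub>y (b y z * (e / 2) powr p)"
    have "\<bar>g z\<bar> < e" if g: "finite_energy g" "total_energy g < \<delta>" "\<bar>g x0\<bar> < \<delta>" for g
    proof -
      have "b y z * \<bar>g y - g z\<bar> powr p < b y z * (e / 2) powr p"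
        using edge_energy_le_total_energy[OF g(1), of "(y, z)"] g(2)
        by (simp add: edge_energy_def \<delta>_def)
      then have "\<bar>g y - g z\<bar> < e / 2"
        using \<open>0 < b y z\<close> \<open>0 < e\<close> p_gt_1 by (simp add: powr_less_powr_iff)
      moreover have "\<bar>g y\<bar> < e / 2"
        using \<delta>\<^sub>y g by (simp add: \<delta>_def)
      ultimately show ?thesis
        by linarith
    qed
    moreover have "0 < \<delta>"
      using \<open>0 < \<delta>\<^sub>y\<close> \<open>0 < b y z\<close> \<open>0 < e\<close> by (simp add: \<delta>_def)
    ultimately show "\<exists>\<delta>>0. \<forall>g. finite_energy g \<longrightarrow> total_energy g < \<delta> \<longrightarrow> \<bar>g x0\<bar> < \<delta> \<longrightarrow> \<bar>g z\<bar> < e"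
      by blast
  qed
qed

lemma norm_op_less_imp:
  assumes "0 < \<rho>" "norm_op p b (\<lambda>_. 0) x0 f < \<rho>"
  shows "total_energy f < 2 * \<rho> powr p" "\<bar>f x0\<bar> < \<rho>"
proof -
  have *: "total_energy f / 2 + \<bar>f x0\<bar> powr p < \<rho> powr p"
    using assms norm_op_less_iff by blast
  then show "total_energy f < 2 * \<rho> powr p"
    using powr_ge_zero[of "\<bar>f x0\<bar>" p] by linarith
  have "\<bar>f x0\<bar> powr p < \<rho> powr p"
    using * total_energy_nonneg[of f] by linarith
  then show "\<bar>f x0\<bar> < \<rho>"
    using assms(1) p_gt_1 by (simp add: powr_less_powr_iff)
qed

lemma value_small_if_norm_op_small:
  assumes "0 < e"
  obtains \<delta> where "0 < \<delta>" "\<And>g. finite_energy g \<Longrightarrow> norm_op p b (\<lambda>_. 0) x0 g < \<delta> \<Longrightarrow> \<bar>g x\<bar> < e"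
proof -
  obtain \<delta> where "0 < \<delta>"
    and \<delta>: "\<And>g. finite_energy g \<Longrightarrow> total_energy g < \<delta> \<Longrightarrow> \<bar>g x0\<bar> < \<delta> \<Longrightarrow> \<bar>g x\<bar> < e"
    using value_small_if_energy_small assms by blast
  obtain \<rho> where "0 < \<rho>" "\<rho> \<le> \<delta> / 2" "\<rho> powr p \<le> \<delta> / 2"
    using exists_radius_powr_le[of "\<delta> / 2" p] \<open>0 < \<delta>\<close> p_gt_1 by auto
  then have "\<bar>g x\<bar> < e" if "finite_energy g" "norm_op p b (\<lambda>_. 0) x0 g < \<rho>" for g
    using \<delta>[OF that(1)] norm_op_less_imp[OF \<open>0 < \<rho>\<close> that(2)] by simp
  then show ?thesis
    using that \<open>0 < \<rho>\<close> by blast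
qed

lemma values_small_on_finite_if_norm_op_small:
  assumes "finite K" "0 < e"
  shows "\<exists>\<delta>>0. \<forall>g. finite_energy g \<longrightarrow> norm_op p b (\<lambda>_. 0) x0 g < \<delta> \<longrightarrow> (\<forall>x\<in>K. \<bar>g x\<bar> < e)"
  using assms(1)
proof (induction rule: finite_induct)
  case empty
  then show ?case
    using zero_less_one by blast
next
  case (insert x K)
  then obtain \<delta>\<^sub>K where "0 < \<delta>\<^sub>K"
    "\<forall>g. finite_energy g \<longrightarrow> norm_op p b (\<lambda>_. 0) x0 g < \<delta>\<^sub>K \<longrightarrow> (\<forall>x\<in>K. \<bar>g x\<bar> < e)"
    by blast
  moreover obtain \<delta>\<^sub>x where "0 < \<delta>\<^sub>x"
    "\<And>g. finite_energy g \<Longrightarrow> norm_op p b (\<lambda>_. 0) x0 g < \<delta>\<^sub>x \<Longrightarrow> \<bar>g x\<bar> < e"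
    using value_small_if_norm_op_small[OF assms(2)] by blast
  ultimately show ?case
    by (intro exI[of _ "min \<delta>\<^sub>K \<delta>\<^sub>x"]) auto
qed

lemma parabolic_imp_one_in_D0:
  assumes "p_parabolic p b (\<lambda>_. 0)"
  shows "in_D0p p b (\<lambda>_. 0) x0 (\<lambda>_. 1)"
  unfolding in_D0p_def
proof (intro conjI allI impI)
  show "in_Dp p b (\<lambda>_. 0) (\<lambda>_. 1)"
    by (simp add: in_Dp_iff finite_energy_def edge_energy_const)
  fix e :: real
  assume "0 < e"
  then have "finite {x0}" "0 < e powr p"
    by simp_all
  then obtain \<phi> where \<phi>: "fin_supp \<phi>" "\<And>x. 0 \<le> \<phi> x \<and> \<phi> x \<le> 1" "\<And>x. x \<in> {x0} \<Longrightarrow> \<phi> x = 1"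
    "total_energy \<phi> < e powr p"
    by (rule parabolic_cutoff[OF assms]) blast
  have "total_energy (\<lambda>x. 1 - \<phi> x) / 2 + \<bar>1 - \<phi> x0\<bar> powr p < e powr p"
    using \<phi>(3)[of x0] \<phi>(4) total_energy_nonneg[of \<phi>]
    by (simp add: total_energy_def edge_energy_const_diff)
  then show "\<exists>\<phi>. fin_supp \<phi> \<and> norm_op p b (\<lambda>_. 0) x0 (\<lambda>x. 1 - \<phi> x) < e"
    using \<phi>(1) norm_op_less_iff[OF \<open>0 < e\<close>] by blast
qed

lemma one_in_D0_imp_parabolic:
  assumes "in_D0p p b (\<lambda>_. 0) x0 (\<lambda>_. 1)"
  shows "p_parabolic p b (\<lambda>_. 0)"
  unfolding p_parabolic_iff_small_energy
proof (intro allI impI)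
  fix K :: "'a set" and e :: real
  assume "finite K" "0 < e"
  obtain \<delta> where "0 < \<delta>" and \<delta>: "\<forall>g. finite_energy g \<longrightarrow> norm_op p b (\<lambda>_. 0) x0 g < \<delta>
      \<longrightarrow> (\<forall>x\<in>K. \<bar>g x\<bar> < 1 / 2)"
    using values_small_on_finite_if_norm_op_small[OF \<open>finite K\<close> half_gt_zero[OF zero_less_one]]
    by blast
  obtain \<rho> where "0 < \<rho>" "\<rho> \<le> \<delta>" "\<rho> powr p \<le> e / 2 powr p / 2"
    using exists_radius_powr_le[of "min \<delta> (e / 2 powr p / 2)" p] \<open>0 < \<delta>\<close> \<open>0 < e\<close> p_gt_1 by auto
  obtain \<phi> where "fin_supp \<phi>" and close: "norm_op p b (\<lambda>_. 0) x0 (\<lambda>x. 1 - \<phi> x) < \<rho>"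
    using assms \<open>0 < \<rho>\<close> unfolding in_D0p_def by blast
  have "finite_energy (\<lambda>x. 1 - \<phi> x)"
    using finite_energy_if_fin_supp[OF \<open>fin_supp \<phi>\<close>]
    by (simp add: finite_energy_def edge_energy_const_diff)
  moreover have "norm_op p b (\<lambda>_. 0) x0 (\<lambda>x. 1 - \<phi> x) < \<delta>"
    using close \<open>\<rho> \<le> \<delta>\<close> by simp
  ultimately have "\<forall>x\<in>K. \<bar>1 - \<phi> x\<bar> < 1 / 2"
    using \<delta> by blast
  then have "\<forall>x\<in>K. 1 \<le> 2 * \<phi> x"
    unfolding abs_less_iff by fastforce
  moreover have "fin_supp (\<lambda>x. 2 * \<phi> x)"
    using \<open>fin_supp \<phi>\<close> by (simp add: fin_supp_def)
  moreover have "total_energy (\<lambda>x. 2 * \<phi> x) < e"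
  proof -
    have "total_energy \<phi> < 2 * \<rho> powr p"
      using norm_op_less_imp(1)[OF \<open>0 < \<rho>\<close> close] by (simp add: total_energy_def edge_energy_const_diff)
    then have "2 powr p * total_energy \<phi> < 2 powr p * (2 * \<rho> powr p)"
      by simp
    also have "\<dots> \<le> e"
      using \<open>\<rho> powr p \<le> e / 2 powr p / 2\<close> by (simp add: field_simps)
    finally show ?thesis
      by (simp add: total_energy_scale)
  qed
  ultimately show "\<exists>\<phi>. fin_supp \<phi> \<and> (\<forall>x\<in>K. 1 \<le> \<phi> x) \<and> total_energy \<phi> < e"
    by blast
qed

lemma norm_op_scale:
  "norm_op p b (\<lambda>_. 0) x0 (\<lambda>x. c * f x) = \<bar>c\<bar> * norm_op p b (\<lambda>_. 0) x0 f"
proof -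
  have "norm_op p b (\<lambda>_. 0) x0 (\<lambda>x. c * f x)
      = (\<bar>c\<bar> powr p * (total_energy f / 2 + \<bar>f x0\<bar> powr p)) powr (1 / p)"
    by (simp add: norm_op_def energy_eq total_energy_scale abs_mult powr_mult algebra_simps)
  also have "\<dots> = \<bar>c\<bar> * norm_op p b (\<lambda>_. 0) x0 f"
    using p_gt_1 total_energy_nonneg[of f]
    by (simp add: norm_op_def energy_eq powr_mult powr_powr)
  finally show ?thesis .
qed

lemma in_D0p_scale:
  assumes "in_D0p p b (\<lambda>_. 0) x0 f"
  shows "in_D0p p b (\<lambda>_. 0) x0 (\<lambda>x. c * f x)"
  unfolding in_D0p_def
proof (intro conjI allI impI)
  show "in_Dp p b (\<lambda>_. 0) (\<lambda>x. c * f x)"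
    using assms finite_energy_scale by (simp add: in_D0p_def in_Dp_iff)
  fix e :: real
  assume "0 < e"
  obtain \<phi> where "fin_supp \<phi>" "norm_op p b (\<lambda>_. 0) x0 (\<lambda>x. f x - \<phi> x) < e / (\<bar>c\<bar> + 1)"
  proof -
    have "0 < e / (\<bar>c\<bar> + 1)"
      using \<open>0 < e\<close> by (simp add: add_pos_nonneg)
    then show ?thesis
      using assms that unfolding in_D0p_def by blast
  qed
  moreover have "fin_supp (\<lambda>x. c * \<phi> x)"
    using \<open>fin_supp \<phi>\<close> by (rule fin_supp_subset) simp
  moreover have "norm_op p b (\<lambda>_. 0) x0 (\<lambda>x. c * f x - c * \<phi> x)
      = \<bar>c\<bar> * norm_op p b (\<lambda>_. 0) x0 (\<lambda>x. f x - \<phi> x)"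
    using norm_op_scale[where c = c and f = "\<lambda>x. f x - \<phi> x"] by (simp add: right_diff_distrib)
  moreover have "\<bar>c\<bar> * norm_op p b (\<lambda>_. 0) x0 (\<lambda>x. f x - \<phi> x) \<le> \<bar>c\<bar> * (e / (\<bar>c\<bar> + 1))"
    using \<open>norm_op p b (\<lambda>_. 0) x0 (\<lambda>x. f x - \<phi> x) < e / (\<bar>c\<bar> + 1)\<close>
    by (intro mult_left_mono) auto
  moreover have "\<bar>c\<bar> * (e / (\<bar>c\<bar> + 1)) < e"
    using \<open>0 < e\<close> by (simp add: field_simps)
  ultimately have "fin_supp (\<lambda>x. c * \<phi> x) \<and> norm_op p b (\<lambda>_. 0) x0 (\<lambda>x. c * f x - c * \<phi> x) < e"
    by simp
  then show "\<exists>\<phi>. fin_supp \<phi> \<and> norm_op p b (\<lambda>_. 0) x0 (\<lambda>x. c * f x - \<phi> x) < e"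
    by blast
qed

text \<open>By Green's formula the energy of \<open>h\<close> equals its pairing with \<open>h - \<phi>\<close>, which Young's
  inequality with exponents \<open>p / (p - 1)\<close> and \<open>p\<close> bounds by a convex combination of the two energies.\<close>

lemma harmonic_energy_le_energy_diff:
  assumes "p_harmonic p b m h" "finite_energy h" "fin_supp \<phi>"
  shows "total_energy h \<le> total_energy (\<lambda>x. h x - \<phi> x)"
proof -
  have "finite {x. \<phi> x \<noteq> 0}"
    using assms(3) by (simp add: fin_supp_def)
  from green_formula[OF _ this, of h] assms(1)
  have "(energy_pairing h \<phi> has_sum 0) UNIV"
    by (simp add: p_harmonic_iff)
  moreover have "(edge_energy h has_sum total_energy h) UNIV"
    using assms(2) by (simp add: finite_energy_def total_energy_def)
  ultimately have "((\<lambda>z. edge_energy h z - energy_pairing h \<phi> z) has_sum total_energy h) UNIV"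
    using has_sum_diff by fastforce
  moreover have "edge_energy h z - energy_pairing h \<phi> z = energy_pairing h (\<lambda>x. h x - \<phi> x) z" for z
    by (simp add: energy_pairing_self[symmetric] energy_pairing_def algebra_simps)
  ultimately have "total_energy h = infsum (energy_pairing h (\<lambda>x. h x - \<phi> x)) UNIV"
    by (simp add: infsumI)
  also have "\<dots> \<le> (p - 1) / p * total_energy h + 1 / p * total_energy (\<lambda>x. h x - \<phi> x)"
  proof (rule infsum_le_energies)
    show "finite_energy (\<lambda>x. h x - \<phi> x)"
      by (rule finite_energy_diff[OF assms(2) finite_energy_if_fin_supp[OF assms(3)]])
    show "\<bar>energy_pairing h (\<lambda>x. h x - \<phi> x) z\<bar>
        \<le> (p - 1) / p * edge_energy h z + 1 / p * edge_energy (\<lambda>x. h x - \<phi> x) z" for z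
      using young_edge_bound[OF young_powr[OF p_gt_1], of "fst z" "snd z"]
      by (simp add: abs_energy_pairing[of _ _ "fst z" "snd z", simplified])
  qed (rule assms(2))
  finally show ?thesis
    using p_gt_1 by (simp add: field_simps)
qed

lemma harmonic_in_D0_constant:
  assumes "p_harmonic p b m h" "in_D0p p b (\<lambda>_. 0) x0 h"
  shows "is_constant h"
proof -
  have "finite_energy h"
    using assms(2) by (simp add: in_D0p_def in_Dp_iff)
  have "total_energy h < \<eta>" if "0 < \<eta>" for \<eta>
  proof -
    define e where "e = (\<eta> / 2) powr (1 / p)"
    have "0 < e" "2 * e powr p = \<eta>"
      using \<open>0 < \<eta>\<close> p_gt_1 by (simp_all add: e_def powr_powr)
    then obtain \<phi> where "fin_supp \<phi>" "norm_op p b (\<lambda>_. 0) x0 (\<lambda>x. h x - \<phi> x) < e"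
      using assms(2) unfolding in_D0p_def by blast
    then show ?thesis
      using harmonic_energy_le_energy_diff[OF assms(1) \<open>finite_energy h\<close>] norm_op_less_imp(1)
        \<open>0 < e\<close> \<open>2 * e powr p = \<eta>\<close> by fastforce
  qed
  then have "total_energy h = 0"
    using total_energy_nonneg[of h] by (metis less_irrefl not_le antisym)
  then show ?thesis
    using is_constant_iff_total_energy_eq_0[OF \<open>finite_energy h\<close>] by simp
qed

lemma parabolic_iff_nonzero_harmonic_in_D0:
  "p_parabolic p b (\<lambda>_. 0) \<longleftrightarrow> (\<exists>f. p_harmonic p b m f \<and> in_D0p p b (\<lambda>_. 0) x0 f \<and> f \<noteq> (\<lambda>_. 0))"
proof
  assume "p_parabolic p b (\<lambda>_. 0)"
  moreover have "p_harmonic p b m (\<lambda>_. 1)"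
    by (simp add: p_harmonic_iff laplacian_def in_Fp_if_bounded[of _ 1])
  ultimately show "\<exists>f. p_harmonic p b m f \<and> in_D0p p b (\<lambda>_. 0) x0 f \<and> f \<noteq> (\<lambda>_. 0)"
    using parabolic_imp_one_in_D0 by (metis zero_neq_one)
next
  assume "\<exists>f. p_harmonic p b m f \<and> in_D0p p b (\<lambda>_. 0) x0 f \<and> f \<noteq> (\<lambda>_. 0)"
  then obtain h where h: "p_harmonic p b m h" "in_D0p p b (\<lambda>_. 0) x0 h" "h \<noteq> (\<lambda>_. 0)"
    by blast
  then obtain k where k: "h = (\<lambda>_. k)"
    using harmonic_in_D0_constant[OF h(1,2)] by (auto simp: is_constant_def)
  then have "in_D0p p b (\<lambda>_. 0) x0 (\<lambda>_. 1 / k * k)" and "k \<noteq> 0"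
    using in_D0p_scale[OF h(2), of "1 / k"] h(3) by auto
  then show "p_parabolic p b (\<lambda>_. 0)"
    by (intro one_in_D0_imp_parabolic) simp
qed

section \<open>The equilibrium potential of a non-parabolic graph\<close>

lemma tendsto_edge_energy:
  assumes "\<And>x. (\<lambda>n. f n x) \<longlonglongrightarrow> g x"
  shows "(\<lambda>n. edge_energy (f n) z) \<longlonglongrightarrow> edge_energy g z"
  unfolding edge_energy_def using p_gt_1 by (intro tendsto_intros assms) auto

lemma tendsto_laplacian:
  assumes "\<And>n y. \<bar>f n y\<bar> \<le> M" "\<And>y. (\<lambda>n. f n y) \<longlonglongrightarrow> g y"
  shows "(\<lambda>n. laplacian (f n) x) \<longlonglongrightarrow> laplacian g x"
  unfolding laplacian_def
proof (rule tendsto_infsum_dominated_const)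
  show "(\<lambda>y. b x y * (2 * M) powr (p - 1)) summable_on UNIV"
    by (rule summable_on_cmult_left[OF b_summable])
  show "\<bar>b x y * signed_pow (f n x - f n y) (p - 1)\<bar> \<le> b x y * (2 * M) powr (p - 1)" for n y
  proof -
    have "\<bar>f n x - f n y\<bar> powr (p - 1) \<le> (2 * M) powr (p - 1)"
      using assms(1)[of n x] assms(1)[of n y] p_gt_1 by (intro powr_mono2) auto
    then show ?thesis
      by (simp add: abs_mult abs_signed_pow b_nonneg mult_left_mono)
  qed
  show "(\<lambda>n. b x y * signed_pow (f n x - f n y) (p - 1)) \<longlonglongrightarrow> b x y * signed_pow (g x - g y) (p - 1)" for y
    using p_gt_1 by (intro tendsto_mult_left tendsto_signed_pow tendsto_diff assms(2)) auto
qed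

text \<open>The direct method: a minimizing sequence has a pointwise convergent subsequence, and the
  energy is lower semicontinuous under pointwise convergence by Fatou's lemma.\<close>

lemma energy_minimizer_exists:
  assumes "S \<noteq> {}" and range: "\<And>\<phi> x. \<phi> \<in> S \<Longrightarrow> \<phi> x \<in> {0..1}"
    and energy: "\<And>\<phi>. \<phi> \<in> S \<Longrightarrow> finite_energy \<phi>"
    and closed: "\<And>f g. (\<And>n. f n \<in> S) \<Longrightarrow> (\<And>x. (\<lambda>n. f n x) \<longlonglongrightarrow> g x) \<Longrightarrow> g \<in> S"
  shows "\<exists>w\<in>S. \<forall>\<phi>\<in>S. total_energy w \<le> total_energy \<phi>"
proof -
  define \<mu> where "\<mu> = (INF \<phi>\<in>S. total_energy \<phi>)"
  have bdd: "bdd_below (total_energy ` S)"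
    by (rule bdd_belowI[of _ 0]) (auto simp: total_energy_nonneg)
  have le: "\<mu> \<le> total_energy \<phi>" if "\<phi> \<in> S" for \<phi>
    unfolding \<mu>_def by (rule cINF_lower[OF bdd that])
  have "\<exists>\<phi>\<in>S. total_energy \<phi> < \<mu> + 1 / (real n + 1)" for n
    using cInf_less_iff[OF _ bdd, of "\<mu> + 1 / (real n + 1)"] \<open>S \<noteq> {}\<close> by (simp add: \<mu>_def)
  then obtain f where f: "\<And>n. f n \<in> S" "\<And>n. total_energy (f n) < \<mu> + 1 / (real n + 1)"
    by metis
  have "(\<lambda>n. total_energy (f n)) \<longlonglongrightarrow> \<mu>"
  proof (rule real_tendsto_sandwich)
    show "\<forall>\<^sub>F n in sequentially. \<mu> \<le> total_energy (f n)"
      using le f(1) by simp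
    show "\<forall>\<^sub>F n in sequentially. total_energy (f n) \<le> \<mu> + 1 / (real n + 1)"
      using f(2) by (simp add: less_imp_le)
    show "(\<lambda>n. \<mu> + 1 / (real n + 1)) \<longlonglongrightarrow> \<mu>"
      using tendsto_add[OF tendsto_const LIMSEQ_inverse_real_of_nat, of \<mu>]
      by (simp add: inverse_eq_divide add.commute)
  qed simp
  obtain r w where "strict_mono r" and r: "\<And>x. (\<lambda>n. f (r n) x) \<longlonglongrightarrow> w x"
    using pointwise_convergent_subseq[OF countable_vertices, of f] range f(1) by metis
  have "w \<in> S"
    using closed[of "\<lambda>n. f (r n)"] f(1) r by blast
  moreover have "(\<lambda>n. total_energy (f (r n))) \<longlonglongrightarrow> \<mu>"
    using LIMSEQ_subseq_LIMSEQ[OF \<open>_ \<longlonglongrightarrow> \<mu>\<close> \<open>strict_mono r\<close>] by (simp add: o_def)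
  then have "total_energy w \<le> \<mu>"
    unfolding total_energy_def using energy f(1) edge_energy_nonneg tendsto_edge_energy[OF r]
    by (intro infsum_le_lim_fatou(2)[of "\<lambda>n. edge_energy (f (r n))"]) (auto simp: finite_energy_def)
  ultimately show ?thesis
    using le order.trans by blast
qed

lemma total_energy_point_perturbation:
  fixes x :: 'a and t :: real
  assumes bounded: "\<And>y. \<bar>f y\<bar> \<le> M" and "finite_energy f"
  defines "r \<equiv> \<lambda>y. b x y * (\<bar>f x + t - f y\<bar> powr p - \<bar>f x - f y\<bar> powr p)"
  shows "r summable_on UNIV" "finite_energy (\<lambda>y. f y + (if y = x then t else 0))"
    "total_energy (\<lambda>y. f y + (if y = x then t else 0)) = total_energy f + 2 * infsum r UNIV"
proof -
  define g where "g y = f y + (if y = x then t else 0)" for y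
  have "\<bar>r y\<bar> \<le> b x y * ((2 * M + \<bar>t\<bar>) powr p + (2 * M) powr p)" for y
  proof -
    have "\<bar>f x + t - f y\<bar> powr p \<le> (2 * M + \<bar>t\<bar>) powr p" "\<bar>f x - f y\<bar> powr p \<le> (2 * M) powr p"
      using bounded[of x] bounded[of y] p_gt_1 by (auto intro!: powr_mono2)
    moreover have "0 \<le> \<bar>f x + t - f y\<bar> powr p" "0 \<le> \<bar>f x - f y\<bar> powr p"
      by simp_all
    ultimately have "\<bar>\<bar>f x + t - f y\<bar> powr p - \<bar>f x - f y\<bar> powr p\<bar>
        \<le> (2 * M + \<bar>t\<bar>) powr p + (2 * M) powr p"
      unfolding abs_le_iff by linarith
    then show ?thesis
      unfolding r_def by (simp add: abs_mult b_nonneg mult_left_mono)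
  qed
  then show r: "r summable_on UNIV"
    by (rule summable_on_comparison_abs[OF summable_on_cmult_left[OF b_summable], rotated])
  have "((\<lambda>z. edge_energy f z + ((if fst z = x then r (snd z) else 0)
      + (if snd z = x then r (fst z) else 0))) has_sum total_energy f + 2 * infsum r UNIV) UNIV"
    using assms(2) r unfolding mult_2 finite_energy_def total_energy_def
    by (intro has_sum_add has_sum_row has_sum_col has_sum_infsum)
  moreover have "edge_energy f z + ((if fst z = x then r (snd z) else 0)
      + (if snd z = x then r (fst z) else 0)) = edge_energy g z" for z
  proof -
    obtain u v where z: "z = (u, v)"
      by force
    have "\<bar>f u - (f x + t)\<bar> = \<bar>f x + t - f u\<bar>" "\<bar>f x - f u\<bar> = \<bar>f u - f x\<bar>"
      by (simp_all add: abs_minus_commute)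
    then show ?thesis
      by (cases "u = x"; cases "v = x")
        (simp_all add: z edge_energy_def r_def g_def b_diag b_sym[of u x] algebra_simps)
  qed
  ultimately have "(edge_energy g has_sum total_energy f + 2 * infsum r UNIV) UNIV"
    by (simp add: fun_eq_iff)
  then show "finite_energy (\<lambda>y. f y + (if y = x then t else 0))"
    "total_energy (\<lambda>y. f y + (if y = x then t else 0)) = total_energy f + 2 * infsum r UNIV"
    unfolding g_def[abs_def] by (auto simp: finite_energy_def total_energy_def summable_on_def infsumI)
qed

lemma shifted_laplacian_term_bound:
  assumes "\<And>y. \<bar>f y\<bar> \<le> M" "0 \<le> t" "t \<le> 1"
  shows "\<bar>b x y * signed_pow (f x - f y + t) (p - 1)\<bar> \<le> b x y * (2 * M + 1) powr (p - 1)"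
proof -
  have "\<bar>f x - f y + t\<bar> powr (p - 1) \<le> (2 * M + 1) powr (p - 1)"
    using assms(1)[of x] assms(1)[of y] assms(2,3) p_gt_1 by (intro powr_mono2) auto
  then show ?thesis
    by (simp add: abs_mult abs_signed_pow b_nonneg mult_left_mono)
qed

text \<open>By the tangent inequality for \<open>|\<cdot>|\<^sup>p\<close>, raising \<open>f\<close> by \<open>t\<close> at \<open>x\<close> increases the energy by at most
  \<open>2 p t\<close> times a shifted Laplacian.\<close>

lemma shifted_laplacian_nonneg_if_minimal:
  assumes bounded: "\<And>y. \<bar>f y\<bar> \<le> M" and "finite_energy f" and "0 < t" "t \<le> 1"
    and minimal: "total_energy f \<le> total_energy (\<lambda>y. f y + (if y = x then t else 0))"
  shows "0 \<le> infsum (\<lambda>y. b x y * signed_pow (f x - f y + t) (p - 1)) UNIV"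
proof -
  define r where "r y = b x y * (\<bar>f x + t - f y\<bar> powr p - \<bar>f x - f y\<bar> powr p)" for y
  note perturbation = total_energy_point_perturbation[OF bounded \<open>finite_energy f\<close>, of x t]
  have "0 \<le> infsum r UNIV"
    using minimal perturbation(3) by (simp add: r_def[abs_def])
  have summable: "(\<lambda>y. b x y * signed_pow (f x - f y + t) (p - 1)) summable_on UNIV"
    using shifted_laplacian_term_bound[where f = f and x = x and t = t, OF bounded] assms(3,4)
    by (intro summable_on_comparison_abs[OF summable_on_cmult_left[OF b_summable[of x]]]) auto
  have "r y \<le> p * t * (b x y * signed_pow (f x - f y + t) (p - 1))" for y
  proof -
    have "\<bar>f x + t - f y\<bar> powr p - \<bar>f x - f y\<bar> powr p \<le> p * t * signed_pow (f x - f y + t) (p - 1)"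
      using abs_powr_above_tangent[OF p_gt_1, of "f x - f y + t" "f x - f y"]
      by (simp add: algebra_simps)
    then have "b x y * (\<bar>f x + t - f y\<bar> powr p - \<bar>f x - f y\<bar> powr p)
        \<le> b x y * (p * t * signed_pow (f x - f y + t) (p - 1))"
      by (rule mult_left_mono[OF _ b_nonneg])
    then show ?thesis
      unfolding r_def by (simp add: mult_ac)
  qed
  then have "infsum r UNIV \<le> infsum (\<lambda>y. p * t * (b x y * signed_pow (f x - f y + t) (p - 1))) UNIV"
    using perturbation(1) summable_on_cmult_right[OF summable]
    by (intro infsum_mono) (auto simp: r_def[abs_def])
  also have "\<dots> = p * t * infsum (\<lambda>y. b x y * signed_pow (f x - f y + t) (p - 1)) UNIV"
    by (rule infsum_cmult_right[OF summable])
  finally have "0 \<le> (p * t) * infsum (\<lambda>y. b x y * signed_pow (f x - f y + t) (p - 1)) UNIV"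
    using \<open>0 \<le> infsum r UNIV\<close> by simp
  moreover have "0 < p * t"
    using \<open>0 < t\<close> p_gt_1 by simp
  ultimately show ?thesis
    by (simp add: zero_le_mult_iff)
qed

lemma laplacian_nonneg_if_locally_minimal:
  assumes bounded: "\<And>y. \<bar>f y\<bar> \<le> M" and "finite_energy f"
    and minimal: "\<And>t. 0 < t \<Longrightarrow> total_energy f \<le> total_energy (\<lambda>y. f y + (if y = x then t else 0))"
  shows "0 \<le> laplacian f x"
proof (rule LIMSEQ_le_const)
  show "(\<lambda>n. infsum (\<lambda>y. b x y * signed_pow (f x - f y + 1 / Suc n) (p - 1)) UNIV)
      \<longlonglongrightarrow> laplacian f x"
    unfolding laplacian_def
  proof (rule tendsto_infsum_dominated_const[OF summable_on_cmult_left[OF b_summable]])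
    show "\<bar>b x y * signed_pow (f x - f y + 1 / Suc n) (p - 1)\<bar> \<le> b x y * (2 * M + 1) powr (p - 1)"
      for n y
      by (rule shifted_laplacian_term_bound[OF bounded]) auto
    have "(\<lambda>n. 1 / Suc n) \<longlonglongrightarrow> 0"
      using LIMSEQ_Suc[OF lim_const_over_n[of 1]] by simp
    then have "(\<lambda>n. f x - f y + 1 / Suc n) \<longlonglongrightarrow> f x - f y" for y
      using tendsto_add[OF tendsto_const, of _ 0 sequentially "f x - f y"] by simp
    then show "(\<lambda>n. b x y * signed_pow (f x - f y + 1 / Suc n) (p - 1))
        \<longlonglongrightarrow> b x y * signed_pow (f x - f y) (p - 1)" for y
      using p_gt_1 by (intro tendsto_mult_left tendsto_signed_pow) auto
  qed
  show "\<exists>N. \<forall>n\<ge>N. 0 \<le> infsum (\<lambda>y. b x y * signed_pow (f x - f y + 1 / Suc n) (p - 1)) UNIV"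
    using shifted_laplacian_nonneg_if_minimal[OF bounded \<open>finite_energy f\<close> _ _ minimal] by simp
qed

lemma laplacian_uminus: "laplacian (\<lambda>y. - f y) x = - laplacian f x"
proof -
  have "signed_pow (- f x - - f y) (p - 1) = - signed_pow (f x - f y) (p - 1)" for y
    by (metis minus_diff_minus signed_pow_minus minus_diff_eq)
  then show ?thesis
    by (simp add: laplacian_def infsum_uminus)
qed

lemma laplacian_eq_0_if_locally_minimal:
  assumes bounded: "\<And>y. \<bar>f y\<bar> \<le> M" and "finite_energy f"
    and minimal: "\<And>t. total_energy f \<le> total_energy (\<lambda>y. f y + (if y = x then t else 0))"
  shows "laplacian f x = 0"
proof -
  have "0 \<le> laplacian f x"
    using laplacian_nonneg_if_locally_minimal[OF bounded \<open>finite_energy f\<close> minimal] .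
  moreover have "0 \<le> laplacian (\<lambda>y. - f y) x"
  proof (rule laplacian_nonneg_if_locally_minimal)
    show "\<bar>- f y\<bar> \<le> M" for y
      using bounded[of y] by simp
    show "finite_energy (\<lambda>y. - f y)"
      using \<open>finite_energy f\<close> by (simp add: finite_energy_def edge_energy_uminus)
    show "total_energy (\<lambda>y. - f y) \<le> total_energy (\<lambda>y. - f y + (if y = x then t else 0))" for t
    proof -
      have "(\<lambda>y. - f y + (if y = x then t else 0)) = (\<lambda>y. - (f y + (if y = x then - t else 0)))"
        by auto
      then have "total_energy (\<lambda>y. - f y + (if y = x then t else 0))
          = total_energy (\<lambda>y. f y + (if y = x then - t else 0))"
        unfolding total_energy_def by (simp only: edge_energy_uminus)
      then show ?thesis
        using minimal[of "- t"] by (simp add: total_energy_def edge_energy_uminus)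
    qed
  qed
  ultimately show ?thesis
    by (simp add: laplacian_uminus)
qed

lemma green_formula_boundary:
  assumes "in_Fp p b u" "finite B" "K \<subseteq> B" "\<And>x. x \<notin> B \<Longrightarrow> \<psi> x = 0" "\<And>x. x \<in> K \<Longrightarrow> \<psi> x = 1"
    "\<And>x. x \<in> B - K \<Longrightarrow> laplacian u x = 0"
  shows "(energy_pairing u \<psi> has_sum 2 * (\<Sum>x\<in>K. laplacian u x)) UNIV"
proof -
  have "(\<Sum>x\<in>B. \<psi> x * laplacian u x) = (\<Sum>x\<in>K. \<psi> x * laplacian u x)"
    using assms(2,3,6) by (intro sum.mono_neutral_right) auto
  also have "\<dots> = (\<Sum>x\<in>K. laplacian u x)"
    using assms(5) by simp
  finally show ?thesis
    using green_formula[where \<psi> = \<psi>, OF assms(1,2) assms(4)] by simp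
qed

text \<open>Pointwise convergence together with convergence of the energies forces convergence in
  energy (a Brezis--Lieb type argument, via Pratt's lemma).\<close>

lemma total_energy_diff_tendsto_0:
  assumes "\<And>n. finite_energy (\<phi> n)" "finite_energy w" and lim: "\<And>x. (\<lambda>n. \<phi> n x) \<longlonglongrightarrow> w x"
    and energy_lim: "(\<lambda>n. total_energy (\<phi> n)) \<longlonglongrightarrow> total_energy w"
  shows "(\<lambda>n. total_energy (\<lambda>x. w x - \<phi> n x)) \<longlonglongrightarrow> 0"
proof -
  have "(\<lambda>n. infsum (edge_energy (\<lambda>x. w x - \<phi> n x)) UNIV) \<longlonglongrightarrow> infsum (\<lambda>_ :: 'a \<times> 'a. 0) UNIV"
  proof (rule tendsto_infsum_dominated[where
        G = "\<lambda>n z. 2 powr p * (edge_energy w z + edge_energy (\<phi> n) z)" and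
        g = "\<lambda>z. 2 powr p * (edge_energy w z + edge_energy w z)"])
    show "(\<lambda>z. 2 powr p * (edge_energy w z + edge_energy (\<phi> n) z)) summable_on UNIV" for n
      using assms(1,2) unfolding finite_energy_def by (intro summable_on_cmult_right summable_on_add)
    show "(\<lambda>z. 2 powr p * (edge_energy w z + edge_energy w z)) summable_on UNIV"
      using assms(2) unfolding finite_energy_def by (intro summable_on_cmult_right summable_on_add)
    show "\<bar>edge_energy (\<lambda>x. w x - \<phi> n x) z\<bar>
        \<le> 2 powr p * (edge_energy w z + edge_energy (\<phi> n) z)" for n z
      using edge_energy_diff_le edge_energy_nonneg by simp
    show "(\<lambda>n. edge_energy (\<lambda>x. w x - \<phi> n x) z) \<longlonglongrightarrow> 0" for z
    proof -
      have "(\<lambda>n. edge_energy (\<lambda>x. w x - \<phi> n x) z) \<longlonglongrightarrow> edge_energy (\<lambda>x. w x - w x) z"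
        by (rule tendsto_edge_energy) (intro tendsto_diff tendsto_const lim)
      then show ?thesis
        by (simp add: edge_energy_def)
    qed
    show "(\<lambda>n. 2 powr p * (edge_energy w z + edge_energy (\<phi> n) z))
        \<longlonglongrightarrow> 2 powr p * (edge_energy w z + edge_energy w z)" for z
      by (intro tendsto_intros tendsto_edge_energy lim)
    have "(\<lambda>n. 2 powr p * (total_energy w + total_energy (\<phi> n)))
        \<longlonglongrightarrow> 2 powr p * (total_energy w + total_energy w)"
      by (intro tendsto_intros energy_lim)
    then show "(\<lambda>n. infsum (\<lambda>z. 2 powr p * (edge_energy w z + edge_energy (\<phi> n) z)) UNIV)
        \<longlonglongrightarrow> infsum (\<lambda>z. 2 powr p * (edge_energy w z + edge_energy w z)) UNIV"
      using assms(1,2) by (simp add: infsum_cmult_right' infsum_add finite_energy_def total_energy_def)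
  qed
  then show ?thesis
    by (simp add: total_energy_def)
qed

lemma in_D0p_if_energy_tendsto:
  assumes "\<And>n. fin_supp (\<phi> n)" "finite_energy w" and lim: "\<And>x. (\<lambda>n. \<phi> n x) \<longlonglongrightarrow> w x"
    and energy_lim: "(\<lambda>n. total_energy (\<phi> n)) \<longlonglongrightarrow> total_energy w"
  shows "in_D0p p b (\<lambda>_. 0) x0 w"
  unfolding in_D0p_def
proof (intro conjI allI impI)
  show "in_Dp p b (\<lambda>_. 0) w"
    using assms(2) by (simp add: in_Dp_iff)
  fix e :: real
  assume "0 < e"
  have "(\<lambda>n. total_energy (\<lambda>x. w x - \<phi> n x) / 2 + \<bar>w x0 - \<phi> n x0\<bar> powr p)
      \<longlonglongrightarrow> 0 / 2 + \<bar>w x0 - w x0\<bar> powr p"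
    using total_energy_diff_tendsto_0[OF finite_energy_if_fin_supp[OF assms(1)] assms(2) lim energy_lim]
      p_gt_1 by (intro tendsto_intros lim) auto
  then have "eventually (\<lambda>n. total_energy (\<lambda>x. w x - \<phi> n x) / 2 + \<bar>w x0 - \<phi> n x0\<bar> powr p
      < e powr p) sequentially"
    using \<open>0 < e\<close> by (intro order_tendstoD(2)) auto
  then obtain n where "total_energy (\<lambda>x. w x - \<phi> n x) / 2 + \<bar>w x0 - \<phi> n x0\<bar> powr p < e powr p"
    using eventually_sequentially by auto
  then show "\<exists>\<phi>. fin_supp \<phi> \<and> norm_op p b (\<lambda>_. 0) x0 (\<lambda>x. w x - \<phi> x) < e"
    using assms(1) norm_op_less_iff[OF \<open>0 < e\<close>] by blast
qed

end

locale p_graph_exhaustion = p_graph +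
  fixes K :: "'a set" and B :: "nat \<Rightarrow> 'a set"
  assumes K_finite: "finite K" and B_finite: "\<And>n. finite (B n)" and K_subset_B: "\<And>n. K \<subseteq> B n"
    and B_mono: "mono B" and B_exhausts: "\<And>x. \<exists>n. x \<in> B n"
begin

definition admissible :: "nat \<Rightarrow> ('a \<Rightarrow> real) set" where
  "admissible n = {\<phi>. (\<forall>x. 0 \<le> \<phi> x \<and> \<phi> x \<le> 1) \<and> (\<forall>x\<in>K. \<phi> x = 1) \<and> (\<forall>x. x \<notin> B n \<longrightarrow> \<phi> x = 0)}"

lemma admissible_fin_supp: "\<phi> \<in> admissible n \<Longrightarrow> fin_supp \<phi>"
  unfolding fin_supp_def admissible_def
  by (rule finite_subset[OF _ B_finite[of n]]) auto

lemma admissible_closed: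
  assumes "\<And>k. f k \<in> admissible n" "\<And>x. (\<lambda>k. f k x) \<longlonglongrightarrow> g x"
  shows "g \<in> admissible n"
proof -
  have "0 \<le> g x" "g x \<le> 1" for x
    using LIMSEQ_le_const[OF assms(2)[of x], of 0] LIMSEQ_le_const2[OF assms(2)[of x], of 1] assms(1)
    by (auto simp: admissible_def)
  moreover have "g x = c" if "\<And>k. f k x = c" for x c
  proof -
    have "(\<lambda>k. c) \<longlonglongrightarrow> g x"
      using assms(2)[of x] that by simp
    then show ?thesis
      by (simp add: LIMSEQ_const_iff)
  qed
  ultimately show ?thesis
    using assms(1) by (simp add: admissible_def)
qed

definition potential :: "nat \<Rightarrow> 'a \<Rightarrow> real" where
  "potential n = (SOME v. v \<in> admissible n \<and> (\<forall>\<phi>\<in>admissible n. total_energy v \<le> total_energy \<phi>))"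

lemma potential_minimal:
  "potential n \<in> admissible n" "\<And>\<phi>. \<phi> \<in> admissible n \<Longrightarrow> total_energy (potential n) \<le> total_energy \<phi>"
proof -
  have "\<exists>v\<in>admissible n. \<forall>\<phi>\<in>admissible n. total_energy v \<le> total_energy \<phi>"
  proof (rule energy_minimizer_exists)
    have "(\<lambda>x. if x \<in> K then 1 else 0) \<in> admissible n"
      using K_subset_B[of n] by (auto simp: admissible_def)
    then show "admissible n \<noteq> {}"
      by blast
    show "\<phi> x \<in> {0..1}" if "\<phi> \<in> admissible n" for \<phi> x
      using that by (simp add: admissible_def)
    show "finite_energy \<phi>" if "\<phi> \<in> admissible n" for \<phi>
      by (rule finite_energy_if_fin_supp[OF admissible_fin_supp[OF that]])
  qed (rule admissible_closed)
  then have "\<exists>v. v \<in> admissible n \<and> (\<forall>\<phi>\<in>admissible n. total_energy v \<le> total_energy \<phi>)"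
    by blast
  then have "potential n \<in> admissible n
      \<and> (\<forall>\<phi>\<in>admissible n. total_energy (potential n) \<le> total_energy \<phi>)"
    unfolding potential_def by (rule someI_ex)
  then show "potential n \<in> admissible n"
    "\<And>\<phi>. \<phi> \<in> admissible n \<Longrightarrow> total_energy (potential n) \<le> total_energy \<phi>"
    by blast+
qed

lemma potential_range: "0 \<le> potential n x" "potential n x \<le> 1"
  using potential_minimal(1)[of n] by (auto simp: admissible_def)

lemma potential_on_K: "x \<in> K \<Longrightarrow> potential n x = 1"
  using potential_minimal(1)[of n] by (auto simp: admissible_def)

lemma potential_outside_B: "x \<notin> B n \<Longrightarrow> potential n x = 0"
  using potential_minimal(1)[of n] by (auto simp: admissible_def)

lemma potential_finite_energy: "finite_energy (potential n)"
  by (rule finite_energy_if_fin_supp[OF admissible_fin_supp[OF potential_minimal(1)]])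

lemma potential_in_Fp: "in_Fp p b (potential n)"
  by (rule in_Fp_if_bounded[of _ 1]) (use potential_range in auto)

text \<open>Clamping a point perturbation back to \<open>[0, 1]\<close> keeps it admissible and does not increase
  the energy, so the minimizer is harmonic off \<open>K\<close>.\<close>

lemma potential_harmonic:
  assumes "x \<in> B n - K"
  shows "laplacian (potential n) x = 0"
proof (rule laplacian_eq_0_if_locally_minimal)
  show bounded: "\<bar>potential n y\<bar> \<le> 1" for y
    using potential_range[of n y] by simp
  show "finite_energy (potential n)"
    by (rule potential_finite_energy)
  fix t
  define g where "g y = potential n y + (if y = x then t else 0)" for y
  have "(\<lambda>y. min 1 (max 0 (g y))) \<in> admissible n"
    using assms potential_on_K potential_outside_B by (auto simp: admissible_def g_def)
  then have "total_energy (potential n) \<le> total_energy (\<lambda>y. min 1 (max 0 (g y)))"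
    by (rule potential_minimal(2))
  also have "\<dots> \<le> total_energy g"
    using total_energy_point_perturbation(2)[OF bounded potential_finite_energy, where x = x and t = t]
    by (intro finite_energy_lipschitz(2)) (auto simp: g_def[abs_def])
  finally show
    "total_energy (potential n) \<le> total_energy (\<lambda>y. potential n y + (if y = x then t else 0))"
    by (simp add: g_def[abs_def])
qed

lemma potential_energy: "total_energy (potential n) = 2 * (\<Sum>x\<in>K. laplacian (potential n) x)"
proof -
  have "(energy_pairing (potential n) (potential n) has_sum 2 * (\<Sum>x\<in>K. laplacian (potential n) x)) UNIV"
    by (rule green_formula_boundary[OF potential_in_Fp B_finite K_subset_B potential_outside_B
          potential_on_K potential_harmonic])
  then show ?thesis
    by (simp add: energy_pairing_self total_energy_def infsumI)
qed

context
  fixes r :: "nat \<Rightarrow> nat" and w :: "'a \<Rightarrow> real"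
  assumes r_mono: "strict_mono r" and w_lim: "\<And>x. (\<lambda>n. potential (r n) x) \<longlonglongrightarrow> w x"
begin

lemma limit_range: "0 \<le> w x \<and> w x \<le> 1"
  using LIMSEQ_le_const[OF w_lim, of 0 x] LIMSEQ_le_const2[OF w_lim, of x 1] potential_range by auto

lemma limit_on_K:
  assumes "x \<in> K"
  shows "w x = 1"
proof -
  have "(\<lambda>n. 1) \<longlonglongrightarrow> w x"
    using w_lim[of x] potential_on_K[OF assms] by simp
  then show ?thesis
    by (simp add: LIMSEQ_const_iff)
qed

lemma limit_in_Fp: "in_Fp p b w"
  by (rule in_Fp_if_bounded[of _ 1]) (use limit_range in auto)

lemma tendsto_potential_laplacian: "(\<lambda>n. laplacian (potential (r n)) x) \<longlonglongrightarrow> laplacian w x"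
  by (rule tendsto_laplacian[of _ 1]) (use potential_range w_lim in auto)

lemma limit_harmonic:
  assumes "x \<notin> K"
  shows "laplacian w x = 0"
proof -
  obtain N where "x \<in> B N"
    using B_exhausts by blast
  have "laplacian (potential (r n)) x = 0" if "N \<le> n" for n
  proof -
    have "B N \<subseteq> B (r n)"
      using B_mono seq_suble[OF r_mono, of n] that by (simp add: monoD)
    then show ?thesis
      using \<open>x \<in> B N\<close> assms by (intro potential_harmonic) auto
  qed
  then have "(\<lambda>n. laplacian (potential (r n)) x) \<longlonglongrightarrow> 0"
    by (intro tendsto_eventually eventually_sequentiallyI)
  then show ?thesis
    using tendsto_potential_laplacian LIMSEQ_unique by blast
qed

lemma limit_superharmonic: "p_superharmonic p b m w"
  unfolding p_superharmonic_iff
proof (intro conjI allI limit_in_Fp)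
  fix x
  show "0 \<le> laplacian w x"
  proof (cases "x \<in> K")
    case True
    then show ?thesis
      unfolding laplacian_def using limit_range
      by (intro infsum_nonneg mult_nonneg_nonneg) (auto simp: limit_on_K b_nonneg signed_pow_nonneg_iff)
  qed (simp add: limit_harmonic)
qed

lemma tendsto_potential_energy:
  "(\<lambda>n. total_energy (potential (r n))) \<longlonglongrightarrow> 2 * (\<Sum>x\<in>K. laplacian w x)"
  unfolding potential_energy by (intro tendsto_intros tendsto_potential_laplacian)

text \<open>Lower semicontinuity (Fatou) gives one inequality; the other comes from pairing \<open>w\<close> with the
  minimizers, which by Green's formula reproduces the limit energy, and Young's inequality.\<close>

lemma limit_energy:
  "finite_energy w" "total_energy w = 2 * (\<Sum>x\<in>K. laplacian w x)"
proof -
  define L where "L = 2 * (\<Sum>x\<in>K. laplacian w x)"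
  have "finite_energy w" and "total_energy w \<le> L"
    using infsum_le_lim_fatou[of "\<lambda>n. edge_energy (potential (r n))" "edge_energy w" L]
      edge_energy_nonneg potential_finite_energy tendsto_edge_energy[OF w_lim]
      tendsto_potential_energy
    by (auto simp: finite_energy_def total_energy_def L_def)
  have "L \<le> (p - 1) / p * total_energy w + 1 / p * total_energy (potential (r n))" for n
  proof -
    have "(energy_pairing w (potential (r n)) has_sum L) UNIV"
      unfolding L_def
      by (rule green_formula_boundary[OF limit_in_Fp B_finite K_subset_B potential_outside_B
            potential_on_K]) (auto intro: limit_harmonic)
    then have "L = infsum (energy_pairing w (potential (r n))) UNIV"
      by (simp add: infsumI)
    also have "\<dots> \<le> (p - 1) / p * total_energy w + 1 / p * total_energy (potential (r n))"
    proof (rule infsum_le_energies[OF \<open>finite_energy w\<close> potential_finite_energy])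
      show "\<bar>energy_pairing w (potential (r n)) z\<bar>
          \<le> (p - 1) / p * edge_energy w z + 1 / p * edge_energy (potential (r n)) z" for z
        using young_edge_bound[OF young_powr[OF p_gt_1], of "fst z" "snd z"]
        by (simp add: abs_energy_pairing[of _ _ "fst z" "snd z", simplified])
    qed
    finally show ?thesis .
  qed
  moreover have "(\<lambda>n. (p - 1) / p * total_energy w + 1 / p * total_energy (potential (r n)))
      \<longlonglongrightarrow> (p - 1) / p * total_energy w + 1 / p * L"
    unfolding L_def by (intro tendsto_intros tendsto_potential_energy)
  ultimately have "L \<le> (p - 1) / p * total_energy w + 1 / p * L"
    by (intro LIMSEQ_le_const) auto
  then have "(p - 1) * L \<le> (p - 1) * total_energy w"
    using p_gt_1 by (simp add: field_simps)
  then have "L \<le> total_energy w"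
    using p_gt_1 by simp
  with \<open>total_energy w \<le> L\<close> show "total_energy w = 2 * (\<Sum>x\<in>K. laplacian w x)"
    by (simp add: L_def)
  show "finite_energy w"
    by fact
qed

lemma limit_in_D0p: "in_D0p p b (\<lambda>_. 0) x0 w"
  using admissible_fin_supp[OF potential_minimal(1)] limit_energy(1) w_lim
    tendsto_potential_energy[folded limit_energy(2)]
  by (rule in_D0p_if_energy_tendsto)

end

end

context p_graph
begin

lemma exists_exhaustion:
  assumes "finite K"
  obtains B where "p_graph_exhaustion b m p K B"
proof -
  obtain enc :: "'a \<Rightarrow> nat" where "inj enc"
    using countable_vertices by (rule countableE)
  define B where "B n = K \<union> enc -` {..<n}" for n
  have "p_graph_exhaustion b m p K B"
  proof (intro p_graph_exhaustion.intro p_graph_exhaustion_axioms.intro p_graph_axioms)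
    show "finite K"
      by fact
    show "finite (B n)" for n
      using \<open>finite K\<close> \<open>inj enc\<close> by (simp add: B_def finite_vimageI)
    show "K \<subseteq> B n" for n
      by (simp add: B_def)
    show "mono B"
      unfolding mono_def B_def by auto
    show "\<exists>n. x \<in> B n" for x
    proof
      show "x \<in> B (Suc (enc x))"
        by (simp add: B_def)
    qed
  qed
  then show ?thesis
    by (rule that)
qed

lemma nonparabolic_imp_nonconstant_superharmonic:
  assumes "\<not> p_parabolic p b (\<lambda>_. 0)"
  obtains w where "\<And>x. 0 \<le> w x \<and> w x \<le> 1" "p_superharmonic p b m w" "in_D0p p b (\<lambda>_. 0) x0 w"
    "\<not> is_constant w"
proof -
  obtain K c where "finite K" "0 < c"
    and capacity: "\<And>\<phi>. fin_supp \<phi> \<Longrightarrow> (\<And>x. x \<in> K \<Longrightarrow> 1 \<le> \<phi> x) \<Longrightarrow> c \<le> total_energy \<phi>"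
    by (rule nonparabolic_capacity[OF assms]) blast
  obtain B where "p_graph_exhaustion b m p K B"
    using exists_exhaustion[OF \<open>finite K\<close>] by blast
  then interpret E: p_graph_exhaustion b m p K B .
  have range: "E.potential n x \<in> {0..1}" for n x
    using E.potential_range by simp
  obtain r w where r: "strict_mono r" and w: "\<And>x. (\<lambda>n. E.potential (r n) x) \<longlonglongrightarrow> w x"
    by (rule pointwise_convergent_subseq[where f = E.potential, OF countable_vertices range]) blast
  have "c \<le> total_energy (E.potential n)" for n
    by (rule capacity[OF E.admissible_fin_supp[OF E.potential_minimal(1)]]) (simp add: E.potential_on_K)
  then have "c \<le> total_energy w"
    using E.tendsto_potential_energy[OF r w, folded E.limit_energy(2)[OF r w]]
    by (intro LIMSEQ_le_const) auto
  then have "\<not> is_constant w"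
    using \<open>0 < c\<close> is_constant_iff_total_energy_eq_0[OF E.limit_energy(1)[OF r w]] by simp
  then show ?thesis
    using that E.limit_range[OF r w] E.limit_superharmonic[OF r w] E.limit_in_D0p[OF r w] by blast
qed

end

lemma p_graph_if_weighted_graph:
  assumes "weighted_graph b m c" "1 < p"
  shows "p_graph b m p"
  using assms unfolding weighted_graph_def p_graph_def by blast

theorem proposition3p7:
  fixes b :: "'a \<Rightarrow> 'a \<Rightarrow> real" and m c :: "'a \<Rightarrow> real" and p :: real and x0 :: 'a
  assumes "weighted_graph b m c" and "c = (\<lambda>_. 0)" and "1 < p"
  shows "(p_parabolic p b c \<longleftrightarrow>
            (\<forall>f. (\<forall>x. 0 \<le> f x) \<and> p_superharmonic p b m f \<longrightarrow> is_constant f))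
       \<and> (p_parabolic p b c \<longleftrightarrow>
            (\<forall>f. p_superharmonic p b m f \<and> in_Dp p b c f \<longrightarrow> is_constant f))
       \<and> (p_parabolic p b c \<longleftrightarrow>
            (\<forall>f. p_superharmonic p b m f \<and> in_D0p p b c x0 f \<longrightarrow> is_constant f))
       \<and> (p_parabolic p b c \<longleftrightarrow>
            (\<forall>f. p_superharmonic p b m f \<and> bdd_above (range f) \<and> bdd_below (range f)
                 \<longrightarrow> is_constant f))
       \<and> (p_parabolic p b c \<longleftrightarrow>
            (\<forall>f. p_superharmonic p b m f \<and> bdd_below (range f) \<longrightarrow> is_constant f))
       \<and> (p_parabolic p b c \<longleftrightarrow>
            (\<exists>f. p_harmonic p b m f \<and> in_D0p p b c x0 f \<and> f \<noteq> (\<lambda>_. 0)))"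
proof -
  interpret p_graph b m p
    using assms(1,3) by (rule p_graph_if_weighted_graph)
  let ?parabolic = "p_parabolic p b (\<lambda>_. 0)"
  have bounded_below: "is_constant f"
    if ?parabolic "p_superharmonic p b m f" "bdd_below (range f)" for f
    using that by (rule parabolic_superharmonic_bounded_below_constant)
  have finite_energy: "is_constant f"
    if ?parabolic "p_superharmonic p b m f" "in_Dp p b (\<lambda>_. 0) f" for f
    using that by (simp add: in_Dp_iff parabolic_superharmonic_finite_energy_constant)
  have counterexample: "\<exists>w. (\<forall>x. 0 \<le> w x) \<and> bdd_above (range w) \<and> bdd_below (range w)
      \<and> p_superharmonic p b m w \<and> in_D0p p b (\<lambda>_. 0) x0 w \<and> \<not> is_constant w"
    if "\<not> ?parabolic"
    using nonparabolic_imp_nonconstant_superharmonic[OF that, of x0]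
    by (metis (no_types, lifting) bdd_aboveI2 bdd_belowI2)
  have "in_Dp p b (\<lambda>_. 0) f" if "in_D0p p b (\<lambda>_. 0) x0 f" for f
    using that by (simp add: in_D0p_def)
  moreover have "bdd_below (range f)" if "\<forall>x. 0 \<le> f x" for f :: "'a \<Rightarrow> real"
    using that by (intro bdd_belowI2) auto
  ultimately show ?thesis
    unfolding assms(2) parabolic_iff_nonzero_harmonic_in_D0[symmetric]
    using bounded_below finite_energy counterexample by meson
qed

end
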